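(* Let $\triangle PQR$ be a (closed, filled) triangle in $D$ with $\delta(P,Q,R)=\frac{1}{2}\Delta_1'(P,Q)$. Then $\rho(\psi_{\triangle PQR})=\frac{2}{5}$.
   Context: $D$ is the open unit disk in $\mathbb R^2$, $S^1$ its boundary circle identified with $\mathbb R/\mathbb Z$ via the counterclockwise normalized angle. For a closed convex $U\subset D$ and $v\in S^1$, $\psi_U(v)$ is the point $w\in S^1\setminus\{v\}$ such that the line $vw$ meets $U$ and $U$ lies in the closed half-plane to the left of the directed line from $v$ to $w$; it is an orientation-preserving homeomorphism of $S^1$. For such $f$, $\rho(f)=\lim_{n\to\infty}(\overline f^n(x)-x)/n$ with $\overline f$ the lift to $\mathbb R$ satisfying $\overline f(0)\in[0,1)$. Regard $D$ as the Beltrami–Klein model (hyperbolic lines are chords). For distinct $P,Q\in D$ with chord endpoints $v_1,v_2\in S^1$, $d'(P,Q)=\tfrac12\left|\log\frac{|v_1Q||v_2P|}{|v_1P||v_2Q|}\right|$; $\Delta_n'(P,Q)=\log\frac{e^{n d'(P,Q)}+1}{e^{n d'(P,Q)}-1}$ for $n\in\mathbb Z_{>0}$; $\delta(P,Q,R)=\min\{d'(R,S): S \text{ on the chord through } P,Q\}$. *)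

theory Defs
  imports "HOL-Analysis.Analysis"
begin

text \<open>The plane is modelled by the complex numbers; the open unit disk is ball 0 1
and the unit circle is sphere 0 1, parametrised by the normalised angle via circ.\<close>

definition circ :: "real \<Rightarrow> complex" where
  "circ t = cis (2 * pi * t)"

definition Dsk :: "complex set" where
  "Dsk = ball 0 1"

definition line_thru :: "complex \<Rightarrow> complex \<Rightarrow> complex set" where
  "line_thru a b = {a + of_real t * (b - a) | t. True}"

text \<open>p lies in the closed half-plane to the left of the directed line from v to w.\<close>
definition left_of :: "complex \<Rightarrow> complex \<Rightarrow> complex \<Rightarrow> bool" where
  "left_of v w p \<longleftrightarrow> Im (cnj (w - v) * (p - v)) \<ge> 0"

definition psi :: "complex set \<Rightarrow> complex \<Rightarrow> complex" where
  "psi U v = (THE w. w \<in> sphere 0 1 \<and> w \<noteq> v \<and> (line_thru v w \<inter> U \<noteq> {})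
                      \<and> (\<forall>p\<in>U. left_of v w p))"

definition circle_lift :: "(complex \<Rightarrow> complex) \<Rightarrow> real \<Rightarrow> real" where
  "circle_lift f = (THE F. continuous_on UNIV F \<and> (\<forall>x. circ (F x) = f (circ x))
                           \<and> F 0 \<in> {0..<1})"

definition has_rotation_number :: "(complex \<Rightarrow> complex) \<Rightarrow> real \<Rightarrow> bool" where
  "has_rotation_number f r \<longleftrightarrow>
     (\<forall>x. (\<lambda>n. ((circle_lift f ^^ n) x - x) / real n) \<longlonglongrightarrow> r)"

text \<open>Endpoints of the chord through P, Q (their order is irrelevant for d').\<close>
definition chord_end1 :: "complex \<Rightarrow> complex \<Rightarrow> complex" where
  "chord_end1 P Q = (SOME v. v \<in> sphere 0 1 \<and> v \<in> line_thru P Q)"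

definition chord_end2 :: "complex \<Rightarrow> complex \<Rightarrow> complex" where
  "chord_end2 P Q = (SOME v. v \<in> sphere 0 1 \<and> v \<in> line_thru P Q \<and> v \<noteq> chord_end1 P Q)"

definition dK :: "complex \<Rightarrow> complex \<Rightarrow> real" where
  "dK P Q = (if P = Q then 0 else
     (let v1 = chord_end1 P Q; v2 = chord_end2 P Q in
      \<bar>ln ((cmod (Q - v1) * cmod (P - v2)) / (cmod (P - v1) * cmod (Q - v2)))\<bar> / 2))"

definition DeltaK :: "nat \<Rightarrow> complex \<Rightarrow> complex \<Rightarrow> real" where
  "DeltaK n P Q = ln ((exp (real n * dK P Q) + 1) / (exp (real n * dK P Q) - 1))"

definition deltaK :: "complex \<Rightarrow> complex \<Rightarrow> complex \<Rightarrow> real" where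
  "deltaK P Q R = Inf {dK R S | S. S \<in> line_thru P Q \<inter> Dsk}"

end

theory Submission
  imports Defs
begin

(*
  Everything in the statement is invariant under the orientation-preserving isometries of the
  Klein model: they preserve d' and delta, map chords to chords and keep the orientation of
  triangles, hence conjugate the circle maps psi of triangles. After such an isometry P and Q lie
  on the real diameter and R on the positive imaginary axis, and the hypothesis
  delta(P, Q, R) = Delta'_1(P, Q) / 2 forces P = (a^2 - 1) / (a^2 + 1), Q = (b^2 - 1) / (b^2 + 1)
  and R = i a / b for some 0 < a < b. For this triangle five explicit points of the circle form
  a cycle of psi whose chords support the triangle along PQ and then at R, P, Q, R; the cycle is
  traversed like a pentagram, winding twice around the circle. As psi is a homeomorphism of the
  circle without fixed points, its lift F then satisfies F^5 x0 = x0 + 2, so the rotation number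
  is 2/5.
*)

section \<open>Orientation and chords of the unit circle\<close>

definition cross :: "complex \<Rightarrow> complex \<Rightarrow> real" where
  "cross u v = Re u * Im v - Im u * Re v"

lemma left_of_iff_cross: "left_of v w p \<longleftrightarrow> cross (w - v) (p - v) \<ge> 0"
  unfolding left_of_def cross_def by (simp add: algebra_simps)

lemma cross_swap: "cross b a = - cross a b"
  unfolding cross_def by (simp add: algebra_simps)

lemma cross_of_real_mult_left: "cross (of_real t * a) b = t * cross a b"
  unfolding cross_def by (simp add: algebra_simps)

lemma cross_of_real_mult_right: "cross a (of_real t * b) = t * cross a b"
  unfolding cross_def by (simp add: algebra_simps)

lemma cross_self [simp]: "cross a a = 0"
  unfolding cross_def by (simp add: algebra_simps)

lemma cross_mult_mult: "cross (a * x) (a * y) = (cmod a)^2 * cross x y"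
  unfolding cross_def cmod_power2 by (simp add: algebra_simps power2_eq_square)

lemma cross_eq_0_imp_parallel:
  assumes "cross a b = 0" "a \<noteq> 0"
  obtains t where "b = of_real t * a"
proof -
  have n2: "(Re a)^2 + (Im a)^2 \<noteq> 0" using assms(2) by (simp add: complex_eq_iff)
  have c: "Re a * Im b = Im a * Re b" using assms(1) unfolding cross_def by simp
  have "Re b * ((Re a)^2 + (Im a)^2) = (Re a * Re b + Im a * Im b) * Re a"
    "Im b * ((Re a)^2 + (Im a)^2) = (Re a * Re b + Im a * Im b) * Im a"
    using c by (simp_all add: power2_eq_square algebra_simps)
  with n2 have "b = of_real ((Re a * Re b + Im a * Im b) / (cmod a)^2) * a"
    by (simp add: complex_eq_iff cmod_power2 field_simps)
  thus ?thesis using that by blast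
qed

lemma line_thru_iff_cross:
  assumes "P \<noteq> Q"
  shows "S \<in> line_thru P Q \<longleftrightarrow> cross (Q - P) (S - P) = 0"
proof
  assume "S \<in> line_thru P Q"
  then obtain t where "S = P + of_real t * (Q - P)" unfolding line_thru_def by blast
  hence "S - P = of_real t * (Q - P)" by simp
  thus "cross (Q - P) (S - P) = 0" by (simp add: cross_of_real_mult_right)
next
  assume "cross (Q - P) (S - P) = 0"
  moreover have "Q - P \<noteq> 0" using assms by simp
  ultimately obtain t where "S - P = of_real t * (Q - P)" by (rule cross_eq_0_imp_parallel)
  hence "S = P + of_real t * (Q - P)" by (simp add: algebra_simps)
  thus "S \<in> line_thru P Q" unfolding line_thru_def by blast
qed

lemma line_thru_commute:
  assumes "P \<noteq> Q"
  shows "line_thru P Q = line_thru Q P"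
proof -
  have "cross (Q - P) (S - P) = 0 \<longleftrightarrow> cross (P - Q) (S - Q) = 0" for S
    unfolding cross_def by (simp add: algebra_simps) (simp add: eq_commute)
  thus ?thesis using line_thru_iff_cross[OF assms] line_thru_iff_cross[OF not_sym[OF assms]] by blast
qed

lemma not_collinear_imp_cross_nonzero:
  assumes "\<not> collinear {P, Q, R}"
  shows "P \<noteq> Q" and "cross (Q - P) (R - P) \<noteq> 0"
proof -
  show PQ: "P \<noteq> Q"
  proof
    assume "P = Q"
    hence "{P, Q, R} = {P, R}" by auto
    thus False using assms collinear_2 by metis
  qed
  show "cross (Q - P) (R - P) \<noteq> 0"
  proof
    assume "cross (Q - P) (R - P) = 0"
    hence "R \<in> line_thru P Q" using line_thru_iff_cross[OF PQ] by simp
    then obtain t where t: "R = P + of_real t * (Q - P)" unfolding line_thru_def by blast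
    have "collinear {P, Q, R}" unfolding collinear_alt
    proof (rule exI[of _ P], rule exI[of _ "Q - P"], rule ballI)
      fix x assume "x \<in> {P, Q, R}"
      hence "x = P + 0 *\<^sub>R (Q - P) \<or> x = P + 1 *\<^sub>R (Q - P) \<or> x = P + t *\<^sub>R (Q - P)"
        using t by (auto simp: scaleR_conv_of_real)
      thus "\<exists>c. x = P + c *\<^sub>R (Q - P)" by blast
    qed
    thus False using assms by simp
  qed
qed

lemma norm_add_mult_of_real_sq:
  "(cmod (u + of_real m * d))^2 = (cmod u)^2 + 2 * m * Re (cnj u * d) + m^2 * (cmod d)^2"
  unfolding cmod_power2 by (simp add: power2_eq_square algebra_simps)

lemma unit_circle_line_param:
  assumes "cmod u = 1" "d \<noteq> 0" "cmod (u + of_real m * d) = 1"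
  shows "m = 0 \<or> m = - 2 * Re (cnj u * d) / (cmod d)^2"
proof -
  define D where "D = (cmod d)^2"
  define R where "R = Re (cnj u * d)"
  have "1 = 1 + 2 * m * R + m^2 * D"
    using norm_add_mult_of_real_sq[of u m d] assms(1,3) unfolding D_def R_def by simp
  hence e: "m * (2 * R + m * D) = 0" by (simp add: algebra_simps power2_eq_square)
  have n: "D \<noteq> 0" using assms(2) unfolding D_def by simp
  show ?thesis
  proof (cases "m = 0")
    case False
    hence "m * D = - 2 * R" using e by simp
    hence "m = - 2 * R / D" using n by (simp add: field_simps)
    thus ?thesis unfolding D_def R_def by simp
  qed simp
qed

lemma chord_param_inside:
  assumes "cmod v = 1" "cmod w = 1" "v \<noteq> w" "cmod (v + of_real s * (w - v)) < 1"
  shows "0 < s \<and> s < 1"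
proof -
  define D where "D = (cmod (w - v))^2"
  define R where "R = Re (cnj v * (w - v))"
  have D: "D > 0" unfolding D_def using assms(3) by simp
  have "(cmod (v + of_real 1 * (w - v)))^2 = 1 + 2 * 1 * R + 1^2 * D"
    using norm_add_mult_of_real_sq[of v 1 "w - v"] assms(1) unfolding D_def R_def by simp
  hence R: "2 * R = - D" using assms(2) by simp
  have "(cmod (v + of_real s * (w - v)))^2 < 1" using assms(4) by (simp add: power_less_one_iff)
  hence "1 + 2 * s * R + s^2 * D < 1"
    using norm_add_mult_of_real_sq[of v s "w - v"] assms(1) unfolding D_def R_def by simp
  moreover have "2 * s * R = - (s * D)" using R by (metis mult.assoc mult.left_commute mult_minus_right)
  ultimately have "s * (s - 1) * D < 0" by (simp add: algebra_simps power2_eq_square)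
  hence "s * (s - 1) < 0" using D by (simp add: mult_less_0_iff)
  thus ?thesis by (auto simp: mult_less_0_iff)
qed

text \<open>secant_param u c is the nonzero root t of cmod (u + t (c - u)) = 1, so secant_end u c is
  the second end of the chord from u through c.\<close>

definition secant_param :: "complex \<Rightarrow> complex \<Rightarrow> real" where
  "secant_param u c = 2 * (1 - Re (cnj u * c)) / (cmod (c - u))^2"

definition secant_end :: "complex \<Rightarrow> complex \<Rightarrow> complex" where
  "secant_end u c = u + of_real (secant_param u c) * (c - u)"

lemma secant_end_minus: "secant_end u c - u = of_real (secant_param u c) * (c - u)"
  unfolding secant_end_def by simp

lemma Re_cnj_mult_less_1:
  assumes "cmod u = 1" "cmod c < 1"
  shows "Re (cnj u * c) < 1"
proof -
  have "Re (cnj u * c) \<le> cmod (cnj u * c)" by (rule complex_Re_le_cmod)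
  also have "\<dots> = cmod c" using assms(1) by (simp add: norm_mult)
  finally show ?thesis using assms(2) by simp
qed

lemma Re_cnj_mult_self: "Re (cnj u * u) = (cmod u)^2"
  by (simp only: cmod_power2) (simp add: power2_eq_square)

lemma Re_cnj_mult_diff: "cmod u = 1 \<Longrightarrow> Re (cnj u * (c - u)) = Re (cnj u * c) - 1"
  using Re_cnj_mult_self[of u] by (simp add: right_diff_distrib)

lemma secant_param_pos:
  assumes "cmod u = 1" "cmod c < 1"
  shows "secant_param u c > 0"
proof -
  have "c \<noteq> u" using assms by auto
  thus ?thesis unfolding secant_param_def using Re_cnj_mult_less_1[OF assms] by simp
qed

lemma norm_secant_end:
  assumes "cmod u = 1" "cmod c < 1"
  shows "cmod (secant_end u c) = 1"
proof -
  define D where "D = (cmod (c - u))^2"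
  define R where "R = Re (cnj u * (c - u))"
  have D: "D > 0" unfolding D_def using assms by auto
  have m: "secant_param u c = - 2 * R / D"
    unfolding secant_param_def R_def D_def using Re_cnj_mult_diff[OF assms(1)] by simp
  have "(cmod (secant_end u c))^2 = 1 + 2 * secant_param u c * R + (secant_param u c)^2 * D"
    unfolding secant_end_def using norm_add_mult_of_real_sq assms(1) unfolding D_def R_def by simp
  also have "\<dots> = 1" unfolding m using D by (simp add: field_simps power2_eq_square)
  finally show ?thesis using norm_ge_zero[of "secant_end u c"] by (auto simp: power2_eq_1_iff)
qed

lemma secant_end_neq:
  assumes "cmod u = 1" "cmod c < 1"
  shows "secant_end u c \<noteq> u"
proof -
  have "secant_end u c - u = of_real (secant_param u c) * (c - u)" by (rule secant_end_minus)
  also have "\<dots> \<noteq> 0" using secant_param_pos[OF assms] assms by auto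
  finally show ?thesis by simp
qed

lemma secant_end_unique:
  assumes "cmod u = 1" "cmod c < 1" "cmod w = 1" "w \<noteq> u" "cross (w - u) (c - u) = 0"
  shows "w = secant_end u c"
proof -
  have cu: "c - u \<noteq> 0" using assms by auto
  have "cross (c - u) (w - u) = 0" using assms(5) cross_swap[of "w - u"] by simp
  then obtain l where "w - u = of_real l * (c - u)" using cu by (rule cross_eq_0_imp_parallel)
  hence wl: "w = u + of_real l * (c - u)" by (simp add: algebra_simps)
  have "l \<noteq> 0" using wl assms(4) by auto
  hence "l = - 2 * Re (cnj u * (c - u)) / (cmod (c - u))^2"
    using unit_circle_line_param[OF assms(1) cu, of l] wl assms(3) by auto
  hence "l = secant_param u c"
    unfolding secant_param_def using Re_cnj_mult_diff[OF assms(1), of c] by simp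
  thus ?thesis unfolding secant_end_def wl by simp
qed

lemma cross_secant_end: "cross (secant_end u c - u) (x - u) = secant_param u c * cross (c - u) (x - u)"
  unfolding secant_end_minus by (rule cross_of_real_mult_left)

lemma secant_end_eqI:
  assumes u: "cmod u = 1" and c: "cmod c < 1" and c': "cmod c' < 1"
    and "cross (c - u) (c' - u) = 0"
  shows "secant_end u c = secant_end u c'"
proof (rule secant_end_unique[OF u c'])
  show "cmod (secant_end u c) = 1" by (rule norm_secant_end[OF u c])
  show "secant_end u c \<noteq> u" by (rule secant_end_neq[OF u c])
  show "cross (secant_end u c - u) (c' - u) = 0" using assms(4) by (simp add: cross_secant_end)
qed

lemma secant_param_gt_1:
  assumes v: "cmod v = 1" and c: "cmod c < 1"
  shows "secant_param v c > 1"
proof -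
  define m where "m = secant_param v c"
  have m0: "m > 0" unfolding m_def by (rule secant_param_pos[OF v c])
  have "c = v + of_real (1 / m) * (secant_end v c - v)"
    unfolding secant_end_minus m_def[symmetric] using m0 by simp
  hence "cmod (v + of_real (1 / m) * (secant_end v c - v)) < 1" using c by simp
  hence "1 / m < 1"
    using chord_param_inside[OF v norm_secant_end[OF v c] not_sym[OF secant_end_neq[OF v c]]]
    by blast
  thus ?thesis unfolding m_def[symmetric] using m0 by (simp add: field_simps)
qed

lemma secant_end_secant_end:
  assumes v: "cmod v = 1" and c: "cmod c < 1"
  shows "secant_end (secant_end v c) c = v"
proof -
  define m where "m = secant_param v c"
  define w where "w = secant_end v c"
  have vw: "v - w = - (of_real m * (c - v))" and cw: "c - w = of_real (1 - m) * (c - v)"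
    using secant_end_minus[of v c] unfolding w_def m_def by (simp_all add: algebra_simps)
  have "cross (v - w) (c - w) = 0"
    unfolding vw cw by (simp add: cross_def algebra_simps)
  hence "v = secant_end w c"
    using secant_end_unique[OF _ c v] norm_secant_end[OF v c] secant_end_neq[OF v c]
    unfolding w_def by metis
  thus ?thesis unfolding w_def by simp
qed

lemma cross_secant_end_other_side:
  assumes v: "cmod v = 1" and c: "cmod c < 1" and "cross (c - v) (x - v) \<ge> 0"
  shows "cross (c - secant_end v c) (x - secant_end v c) \<le> 0"
proof -
  define m where "m = secant_param v c"
  have m1: "m > 1" unfolding m_def by (rule secant_param_gt_1[OF v c])
  have cw: "c - secant_end v c = of_real (1 - m) * (c - v)"
    and xw: "x - secant_end v c = (x - v) - of_real m * (c - v)"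
    using secant_end_minus[of v c] unfolding m_def by (simp_all add: algebra_simps)
  have "cross (c - secant_end v c) (x - secant_end v c) = (1 - m) * cross (c - v) (x - v)"
    unfolding cw xw by (simp add: cross_def algebra_simps)
  thus ?thesis using m1 assms(3) by (simp add: mult_le_0_iff)
qed

section \<open>The map psi of a triangle\<close>

lemma convex_cross_halfplane: "convex {p. cross a (p - v) \<ge> 0}"
proof (rule convexI)
  fix x y and u w :: real
  assume "x \<in> {p. cross a (p - v) \<ge> 0}" "y \<in> {p. cross a (p - v) \<ge> 0}" "0 \<le> u" "0 \<le> w"
    and uw: "u + w = 1"
  have wu: "w = 1 - u" using uw by simp
  have "cross a (u *\<^sub>R x + w *\<^sub>R y - v) = u * cross a (x - v) + w * cross a (y - v)"
    unfolding cross_def wu by (simp add: algebra_simps)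
  with \<open>x \<in> _\<close> \<open>y \<in> _\<close> \<open>0 \<le> u\<close> \<open>0 \<le> w\<close>
  show "u *\<^sub>R x + w *\<^sub>R y \<in> {p. cross a (p - v) \<ge> 0}" by simp
qed

lemma cross_nonneg_convex_hull:
  assumes "\<forall>x\<in>V. cross a (x - v) \<ge> 0" "p \<in> convex hull V"
  shows "cross a (p - v) \<ge> 0"
proof -
  have "convex hull V \<subseteq> {p. cross a (p - v) \<ge> 0}"
    by (rule hull_minimal) (use assms(1) convex_cross_halfplane in auto)
  thus ?thesis using assms(2) by auto
qed

lemma norm_convex_hull_less:
  assumes "V \<subseteq> ball 0 1" "p \<in> convex hull V"
  shows "cmod p < 1"
proof -
  have "convex hull V \<subseteq> ball 0 1" by (rule hull_minimal) (use assms(1) convex_ball in auto)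
  thus ?thesis using assms(2) by auto
qed

lemma psi_triangle_eqI:
  assumes V: "{P,Q,R} \<subseteq> ball (0::complex) 1"
    and v: "cmod v = 1" and w: "cmod w = 1" "w \<noteq> v"
    and c: "c \<in> {P,Q,R}" "cross (w - v) (c - v) = 0"
    and all: "\<forall>x\<in>{P,Q,R}. cross (w - v) (x - v) \<ge> 0"
  shows "psi (convex hull {P,Q,R}) v = w"
  unfolding psi_def
proof (rule the_equality)
  let ?T = "convex hull {P,Q,R}"
  have cT: "c \<in> ?T" by (rule hull_inc[OF c(1)])
  have cb: "cmod c < 1" using V c(1) by auto
  have "w - v \<noteq> 0" using w by simp
  then obtain t where "c - v = of_real t * (w - v)" using cross_eq_0_imp_parallel[OF c(2)] by blast
  hence ct: "c = v + of_real t * (w - v)" by (simp add: algebra_simps)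
  have t01: "0 < t \<and> t < 1"
    using chord_param_inside[OF v w(1) not_sym[OF w(2)], of t] cb unfolding ct by simp
  have "c \<in> line_thru v w" unfolding line_thru_def ct by blast
  hence "line_thru v w \<inter> ?T \<noteq> {}" using cT by blast
  moreover have "\<forall>p\<in>?T. left_of v w p"
    unfolding left_of_iff_cross using cross_nonneg_convex_hull[OF all] by blast
  ultimately show "w \<in> sphere 0 1 \<and> w \<noteq> v \<and> line_thru v w \<inter> ?T \<noteq> {} \<and> (\<forall>p\<in>?T. left_of v w p)"
    using w by simp
  fix w'
  assume h: "w' \<in> sphere 0 1 \<and> w' \<noteq> v \<and> line_thru v w' \<inter> ?T \<noteq> {} \<and> (\<forall>p\<in>?T. left_of v w' p)"
  hence w': "cmod w' = 1" "w' \<noteq> v" by auto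
  obtain p where p: "p \<in> line_thru v w'" "p \<in> ?T" using h by blast
  obtain s where s: "p = v + of_real s * (w' - v)" using p(1) unfolding line_thru_def by blast
  have "cmod p < 1" using norm_convex_hull_less[OF V p(2)] .
  hence s01: "0 < s \<and> s < 1"
    using chord_param_inside[OF v w'(1) not_sym[OF w'(2)], of s] unfolding s by simp
  have "cross (w - v) (p - v) = s * cross (w - v) (w' - v)"
    unfolding s by (simp add: cross_of_real_mult_right)
  hence g1: "cross (w - v) (w' - v) \<ge> 0"
    using cross_nonneg_convex_hull[OF all p(2)] s01 by (simp add: zero_le_mult_iff)
  have e3: "cross (w' - v) (c - v) = - t * cross (w - v) (w' - v)"
    unfolding ct using cross_swap[of "w' - v" "w - v"] by (simp add: cross_of_real_mult_right)
  have "cross (w' - v) (c - v) \<ge> 0" using h cT unfolding left_of_iff_cross by blast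
  hence "cross (w - v) (w' - v) \<le> 0" using e3 t01 by (simp add: mult_le_0_iff)
  hence "cross (w' - v) (c - v) = 0" using e3 g1 by simp
  hence "w' = secant_end v c" by (rule secant_end_unique[OF v cb w'])
  moreover have "w = secant_end v c" using secant_end_unique[OF v cb w c(2)] .
  ultimately show "w' = w" by simp
qed

lemma cross_trans_halfplane:
  assumes "Re (cnj v * a) < 0" "Re (cnj v * b) < 0" "Re (cnj v * e) < 0"
    and "cross a b \<ge> 0" "cross b e \<ge> 0"
  shows "cross a e \<ge> 0"
proof -
  have jacobi: "Re (cnj v * e) * cross a b + Re (cnj v * a) * cross b e + Re (cnj v * b) * cross e a = 0"
    unfolding cross_def by (simp add: algebra_simps)
  have "Re (cnj v * e) * cross a b \<le> 0" "Re (cnj v * a) * cross b e \<le> 0"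
    using assms by (simp_all add: mult_le_0_iff)
  hence "Re (cnj v * b) * cross e a \<ge> 0" using jacobi by linarith
  hence "cross e a \<le> 0" using assms(2) by (simp add: zero_le_mult_iff)
  thus ?thesis using cross_swap[of a e] by simp
qed

text \<open>Seen from a point v of the circle, the vertices of a triangle in the disk lie in an open
  half-plane, where "left of" is a total transitive relation; its maximum is the vertex the
  supporting line through v passes through.\<close>

lemma supporting_vertex:
  assumes V: "{P,Q,R} \<subseteq> ball (0::complex) 1" and v: "cmod v = 1"
  obtains c where "c \<in> {P,Q,R}" "\<forall>x\<in>{P,Q,R}. cross (c - v) (x - v) \<ge> 0"
proof -
  let ?le = "\<lambda>a b. cross (a - v) (b - v) \<ge> 0"
  have neg: "Re (cnj v * (x - v)) < 0" if "x \<in> {P,Q,R}" for x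
    using Re_cnj_mult_less_1[OF v, of x] Re_cnj_mult_diff[OF v, of x] V that by auto
  have total: "?le a b \<or> ?le b a" for a b using cross_swap[of "a - v" "b - v"] by linarith
  have trans: "?le a e" if "?le a b" "?le b e" "a \<in> {P,Q,R}" "b \<in> {P,Q,R}" "e \<in> {P,Q,R}" for a b e
    using cross_trans_halfplane[OF neg neg neg] that by blast
  have refl: "?le a a" for a by simp
  have RQP: "?le R P" if "?le R Q" "?le Q P" using trans[of R Q P] that by simp
  have QRP: "?le Q P" if "?le Q R" "?le R P" using trans[of Q R P] that by simp
  consider "?le P Q \<and> ?le P R" | "?le Q P \<and> ?le Q R" | "?le R P \<and> ?le R Q"
    using total[of P Q] total[of P R] total[of Q R] RQP QRP by blast
  hence "\<exists>c\<in>{P,Q,R}. \<forall>x\<in>{P,Q,R}. ?le c x" by cases auto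
  thus ?thesis using that by blast
qed

lemma psi_triangle_eq_secant_end:
  assumes V: "{P,Q,R} \<subseteq> ball (0::complex) 1" and v: "cmod v = 1"
    and c: "c \<in> {P,Q,R}" and all: "\<forall>x\<in>{P,Q,R}. cross (c - v) (x - v) \<ge> 0"
  shows "psi (convex hull {P,Q,R}) v = secant_end v c"
proof (rule psi_triangle_eqI[OF V v _ secant_end_neq c])
  show cb: "cmod c < 1" using V c by auto
  show "cmod (secant_end v c) = 1" by (rule norm_secant_end[OF v cb])
  show "cross (secant_end v c - v) (c - v) = 0" by (simp add: cross_secant_end)
  show "\<forall>x\<in>{P, Q, R}. 0 \<le> cross (secant_end v c - v) (x - v)"
    using all secant_param_pos[OF v cb] by (simp add: cross_secant_end)
qed (rule v)

lemma psi_triangle_iff: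
  assumes V: "{P,Q,R} \<subseteq> ball (0::complex) 1"
    and v: "cmod v = 1" and w: "cmod w = 1" "w \<noteq> v"
  shows "psi (convex hull {P,Q,R}) v = w \<longleftrightarrow>
    (\<exists>c\<in>{P,Q,R}. cross (w - v) (c - v) = 0) \<and> (\<forall>x\<in>{P,Q,R}. cross (w - v) (x - v) \<ge> 0)"
proof
  assume psi: "psi (convex hull {P,Q,R}) v = w"
  obtain c where c: "c \<in> {P,Q,R}" "\<forall>x\<in>{P,Q,R}. cross (c - v) (x - v) \<ge> 0"
    using supporting_vertex[OF V v] .
  have "w = secant_end v c" using psi psi_triangle_eq_secant_end[OF V v c] by simp
  moreover have "secant_param v c > 0" using secant_param_pos[OF v] V c(1) by auto
  ultimately show "(\<exists>c\<in>{P,Q,R}. cross (w - v) (c - v) = 0) \<and> (\<forall>x\<in>{P,Q,R}. cross (w - v) (x - v) \<ge> 0)"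
    using c by (auto simp: cross_secant_end)
qed (use psi_triangle_eqI[OF V v w] in blast)

lemma psi_triangle_sphere:
  assumes V: "{P,Q,R} \<subseteq> ball (0::complex) 1" and v: "cmod v = 1"
  shows "cmod (psi (convex hull {P,Q,R}) v) = 1" and "psi (convex hull {P,Q,R}) v \<noteq> v"
proof -
  obtain c where c: "c \<in> {P,Q,R}" "\<forall>x\<in>{P,Q,R}. cross (c - v) (x - v) \<ge> 0"
    using supporting_vertex[OF V v] .
  have cb: "cmod c < 1" using V c(1) by auto
  show "cmod (psi (convex hull {P,Q,R}) v) = 1" "psi (convex hull {P,Q,R}) v \<noteq> v"
    unfolding psi_triangle_eq_secant_end[OF V v c] using norm_secant_end[OF v cb] secant_end_neq[OF v cb]
    by auto
qed

text \<open>psi agrees with the continuous map v \<mapsto> secant_end v c on each of the three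
  closed arcs where a fixed vertex c is the supporting one.\<close>

lemma continuous_on_psi_triangle:
  assumes V: "{P,Q,R} \<subseteq> ball (0::complex) 1"
  shows "continuous_on (sphere 0 1) (psi (convex hull {P,Q,R}))"
proof -
  define S where "S c = sphere 0 1 \<inter> {v. \<forall>x\<in>{P,Q,R}. 0 \<le> cross (c - v) (x - v)}" for c
  have "S c = sphere 0 1 \<inter> {v. 0 \<le> cross (c - v) (P - v)} \<inter> {v. 0 \<le> cross (c - v) (Q - v)}
     \<inter> {v. 0 \<le> cross (c - v) (R - v)}" for c
    unfolding S_def by auto
  hence closed: "closed (S c)" for c
    unfolding cross_def by (auto intro!: closed_Int closed_Collect_le continuous_intros)
  have "continuous_on (S c) (psi (convex hull {P,Q,R}))" if c: "c \<in> {P,Q,R}" for c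
  proof -
    have "cmod c < 1" using V c by auto
    hence "continuous_on (S c) (\<lambda>v. secant_end v c)"
      unfolding secant_end_def secant_param_def S_def
      by (intro continuous_intros continuous_on_divide) auto
    moreover have "\<forall>v\<in>S c. psi (convex hull {P,Q,R}) v = secant_end v c"
      unfolding S_def using psi_triangle_eq_secant_end[OF V _ c] by auto
    ultimately show ?thesis using continuous_on_cong by force
  qed
  moreover have "sphere 0 1 \<subseteq> S P \<union> S Q \<union> S R"
  proof
    fix v :: complex assume "v \<in> sphere 0 1"
    moreover obtain c where "c \<in> {P,Q,R}" "\<forall>x\<in>{P,Q,R}. cross (c - v) (x - v) \<ge> 0"
      using supporting_vertex[OF V, of v] calculation by auto
    ultimately show "v \<in> S P \<union> S Q \<union> S R" unfolding S_def by auto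
  qed
  hence "sphere 0 1 = S P \<union> S Q \<union> S R" unfolding S_def by auto
  ultimately show ?thesis by (metis closed closed_Un continuous_on_closed_Un insertCI)
qed

text \<open>If v and v' have the same image w, the supporting vertices c, c' of both
  lie on the chord from w, so v and v' are both its other end.\<close>

lemma inj_on_psi_triangle:
  assumes V: "{P,Q,R} \<subseteq> ball (0::complex) 1"
  shows "inj_on (psi (convex hull {P,Q,R})) (sphere 0 1)"
proof (rule inj_onI)
  fix v v' :: complex
  assume "v \<in> sphere 0 1" "v' \<in> sphere 0 1"
    and eq: "psi (convex hull {P,Q,R}) v = psi (convex hull {P,Q,R}) v'"
  hence v: "cmod v = 1" and v': "cmod v' = 1" by auto
  obtain c where c: "c \<in> {P,Q,R}" "\<forall>x\<in>{P,Q,R}. cross (c - v) (x - v) \<ge> 0"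
    using supporting_vertex[OF V v] .
  obtain c' where c': "c' \<in> {P,Q,R}" "\<forall>x\<in>{P,Q,R}. cross (c' - v') (x - v') \<ge> 0"
    using supporting_vertex[OF V v'] .
  have cb: "cmod c < 1" and cb': "cmod c' < 1" using V c(1) c'(1) by auto
  define w where "w = secant_end v c"
  have w: "w = secant_end v' c'"
    using eq psi_triangle_eq_secant_end[OF V v c] psi_triangle_eq_secant_end[OF V v' c'] w_def by simp
  have w1: "cmod w = 1" unfolding w_def by (rule norm_secant_end[OF v cb])
  have "cross (c - w) (c' - w) \<le> 0"
    unfolding w_def by (rule cross_secant_end_other_side[OF v cb]) (use c c' in auto)
  moreover have "cross (c' - w) (c - w) \<le> 0"
    unfolding w by (rule cross_secant_end_other_side[OF v' cb']) (use c c' in auto)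
  ultimately have z: "cross (c - w) (c' - w) = 0" using cross_swap[of "c - w" "c' - w"] by simp
  have "v = secant_end w c" unfolding w_def by (rule secant_end_secant_end[OF v cb, symmetric])
  also have "\<dots> = secant_end w c'" by (rule secant_end_eqI[OF w1 cb cb' z])
  also have "\<dots> = v'" unfolding w by (rule secant_end_secant_end[OF v' cb'])
  finally show "v = v'" .
qed

section \<open>Lifts and rotation numbers\<close>

lemma norm_circ [simp]: "cmod (circ x) = 1"
  unfolding circ_def by simp

lemma circ_nonzero [simp]: "circ x \<noteq> 0"
  using norm_circ[of x] by (metis norm_zero zero_neq_one)

lemma circ_add: "circ (x + y) = circ x * cis (2 * pi * y)"
  unfolding circ_def by (simp add: cis_mult distrib_left)

lemma circ_add_Ints: "k \<in> \<int> \<Longrightarrow> circ (x + k) = circ x"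
  unfolding circ_add by (auto elim!: Ints_cases)

lemma cis_2pi_eq_1_imp_Ints:
  assumes "cis (2 * pi * x) = 1" shows "x \<in> \<int>"
proof -
  have "exp (\<i> * complex_of_real (2 * pi * x)) = 1" using assms by (simp add: cis_conv_exp)
  then obtain n :: int where "2 * pi * x = 2 * pi * of_int n"
    unfolding exp_eq_1 by auto
  thus ?thesis by simp
qed

lemma circ_eq_imp_diff_Ints:
  assumes "circ x = circ y" shows "x - y \<in> \<int>"
proof (rule cis_2pi_eq_1_imp_Ints)
  have "cis (2 * pi * (x - y)) = cis (2 * pi * x) / cis (2 * pi * y)"
    by (simp add: cis_divide right_diff_distrib)
  thus "cis (2 * pi * (x - y)) = 1" using assms unfolding circ_def by simp
qed

lemma cis_Arg2pi_unit: "cmod z = 1 \<Longrightarrow> cis (Arg2pi z) = z"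
  using complex_norm_eq_1_exp[of z] by (simp add: cis_conv_exp)

definition ang :: "complex \<Rightarrow> complex \<Rightarrow> real" where
  "ang a b = Arg2pi (b / a) / (2 * pi)"

lemma ang_range: "0 \<le> ang a b \<and> ang a b < 1"
  unfolding ang_def using Arg2pi[of "b / a"] by (simp add: field_simps)

lemma cis_ang:
  assumes "cmod a = 1" "cmod b = 1"
  shows "cis (2 * pi * ang a b) = b / a"
  unfolding ang_def using assms by (simp add: cis_Arg2pi_unit norm_divide)

lemma ang_eq:
  assumes "cmod a = 1" "cmod b = 1"
  shows "b = a * cis (2 * pi * ang a b)"
  using cis_ang[OF assms] assms(1) by auto

lemma ang_pos:
  assumes "cmod a = 1" "cmod b = 1" "a \<noteq> b"
  shows "0 < ang a b"
proof -
  have "ang a b \<noteq> 0" using ang_eq[OF assms(1,2)] assms(3) by auto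
  thus ?thesis using ang_range[of a b] by linarith
qed

lemma ang_cis:
  assumes "a \<noteq> 0" "0 \<le> t" "t < 1"
  shows "ang a (a * cis (2 * pi * t)) = t"
proof -
  have "Arg2pi (cis (2 * pi * t)) = 2 * pi * t"
    by (rule Arg2pi_unique[of 1]) (use assms in \<open>simp_all add: cis_conv_exp\<close>)
  thus ?thesis unfolding ang_def using assms(1) by simp
qed

lemma sin_double_sum:
  fixes X Y :: real
  shows "sin (2 * (X + Y)) - sin (2 * X) - sin (2 * Y) = - 4 * sin X * sin Y * sin (X + Y)"
proof -
  have b1: "sin (2 * X) = sin ((X + Y) + (X - Y))" and b2: "sin (2 * Y) = sin ((X + Y) - (X - Y))"
    by (simp_all add: algebra_simps)
  have b: "sin (2 * X) + sin (2 * Y) = 2 * sin (X + Y) * cos (X - Y)"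
    unfolding b1 b2 sin_add sin_diff by (simp add: algebra_simps)
  have c: "cos (X + Y) - cos (X - Y) = - 2 * sin X * sin Y"
    unfolding cos_add cos_diff by (simp add: algebra_simps)
  have "sin (2 * (X + Y)) - sin (2 * X) - sin (2 * Y) = 2 * sin (X + Y) * (cos (X + Y) - cos (X - Y))"
    using sin_double[of "X + Y"] b by (simp add: algebra_simps)
  also have "\<dots> = - 4 * sin X * sin Y * sin (X + Y)" unfolding c by (simp add: algebra_simps)
  finally show ?thesis .
qed

lemma cross_cis_sub_1:
  fixes X Y :: real
  shows "cross (cis (2 * (X + Y)) - 1) (cis (2 * X) - 1) = - 4 * sin X * sin Y * sin (X + Y)"
proof -
  have "cross (cis (2 * (X + Y)) - 1) (cis (2 * X) - 1)
      = (sin (2 * X) * cos (2 * (X + Y)) - cos (2 * X) * sin (2 * (X + Y))) - sin (2 * X) + sin (2 * (X + Y))"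
    unfolding cross_def by (simp add: algebra_simps)
  also have "sin (2 * X) * cos (2 * (X + Y)) - cos (2 * X) * sin (2 * (X + Y)) = - sin (2 * Y)"
    unfolding sin_diff[symmetric] by (simp add: algebra_simps)
  finally show ?thesis using sin_double_sum[of X Y] by simp
qed

text \<open>Angles add up when b lies on the counterclockwise arc from a to c, i.e. to the right of
  the chord from a to c.\<close>

lemma ang_add:
  assumes a: "cmod a = 1" and b: "cmod b = 1" and c: "cmod c = 1"
    and abc: "cross (c - a) (b - a) < 0"
  shows "ang a b + ang b c = ang a c"
proof -
  define s where "s = ang a b"
  define t where "t = ang b c"
  have "a \<noteq> b" "b \<noteq> c" using abc by (auto simp: cross_def)
  hence s01: "0 < s" "s < 1" and t01: "0 < t" "t < 1"
    unfolding s_def t_def using ang_pos a b c ang_range by auto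
  have bs: "b = a * cis (2 * pi * s)" unfolding s_def by (rule ang_eq[OF a b])
  have "c = b * cis (2 * pi * t)" unfolding t_def by (rule ang_eq[OF b c])
  hence cst: "c = a * cis (2 * pi * (s + t))" using bs by (simp add: cis_mult distrib_left mult.assoc)
  have "cross (c - a) (b - a) = cross (a * (cis (2 * (pi * s + pi * t)) - 1)) (a * (cis (2 * (pi * s)) - 1))"
    unfolding cst bs by (simp add: algebra_simps)
  also have "\<dots> = - 4 * sin (pi * s) * sin (pi * t) * sin (pi * (s + t))"
    unfolding cross_mult_mult a cross_cis_sub_1 by (simp add: distrib_left)
  finally have "sin (pi * (s + t)) > 0"
    using abc sin_gt_zero[of "pi * s"] sin_gt_zero[of "pi * t"] s01 t01
    by (simp add: mult_less_0_iff zero_less_mult_iff)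
  moreover have "sin (pi * (s + t)) \<le> 0" if "1 \<le> s + t"
    by (rule sin_le_zero) (use that s01 t01 in auto)
  ultimately have "s + t < 1" by force
  moreover have "a \<noteq> 0" using a by auto
  ultimately have "ang a c = s + t" unfolding cst using ang_cis[of a "s + t"] s01 t01 by simp
  thus ?thesis unfolding s_def t_def by simp
qed

lemma ang_cycle5_Ints:
  assumes "cmod a = 1" "cmod b = 1" "cmod c = 1" "cmod d = 1" "cmod e = 1"
  shows "ang a b + ang b c + ang c d + ang d e + ang e a \<in> \<int>"
proof (rule cis_2pi_eq_1_imp_Ints)
  have "a \<noteq> 0" "b \<noteq> 0" "c \<noteq> 0" "d \<noteq> 0" "e \<noteq> 0" using assms by auto
  thus "cis (2 * pi * (ang a b + ang b c + ang c d + ang d e + ang e a)) = 1"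
    using cis_ang[OF assms(1,2)] cis_ang[OF assms(2,3)] cis_ang[OF assms(3,4)] cis_ang[OF assms(4,5)]
      cis_ang[OF assms(5,1)] by (simp add: distrib_left flip: cis_mult)
qed

text \<open>A 5-cycle on the circle traversed like the pentagram: o_(i+3) lies on the counterclockwise
  arc from o_i to o_(i+1), while o_(i+2) does not.\<close>

definition pentagram :: "complex \<Rightarrow> complex \<Rightarrow> complex \<Rightarrow> complex \<Rightarrow> complex \<Rightarrow> bool" where
  "pentagram o0 o1 o2 o3 o4 \<longleftrightarrow>
     cross (o1 - o0) (o3 - o0) < 0 \<and> cross (o2 - o1) (o4 - o1) < 0 \<and> cross (o3 - o2) (o0 - o2) < 0 \<and>
     cross (o4 - o3) (o1 - o3) < 0 \<and> cross (o0 - o4) (o2 - o4) < 0 \<and>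
     cross (o1 - o0) (o2 - o0) > 0 \<and> cross (o2 - o1) (o3 - o1) > 0 \<and> cross (o3 - o2) (o4 - o2) > 0 \<and>
     cross (o4 - o3) (o0 - o3) > 0 \<and> cross (o0 - o4) (o1 - o4) > 0"

text \<open>Each arc o_i o_(i+1) is the sum of the two arcs of the inner cycle o0 o3 o1 o4 o2, which
  winds an integer number e > 0 of times; adjacent arcs sum to less than a full turn, so 4 e < 5.\<close>

lemma pentagram_ang_sum:
  assumes u: "cmod o0 = 1" "cmod o1 = 1" "cmod o2 = 1" "cmod o3 = 1" "cmod o4 = 1"
    and "pentagram o0 o1 o2 o3 o4"
  shows "ang o0 o1 + ang o1 o2 + ang o2 o3 + ang o3 o4 + ang o4 o0 = 2"
proof -
  note cr = assms(6)[unfolded pentagram_def]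
  have right: "cross (o2 - o0) (o1 - o0) < 0" "cross (o3 - o1) (o2 - o1) < 0"
    "cross (o4 - o2) (o3 - o2) < 0" "cross (o0 - o3) (o4 - o3) < 0" "cross (o1 - o4) (o0 - o4) < 0"
    using cr cross_swap by (metis neg_less_0_iff_less)+
  define e where "e = ang o0 o3 + ang o3 o1 + ang o1 o4 + ang o4 o2 + ang o2 o0"
  have sum: "ang o0 o1 + ang o1 o2 + ang o2 o3 + ang o3 o4 + ang o4 o0 = 2 * e"
    using ang_add[OF u(1,4,2)] ang_add[OF u(2,5,3)] ang_add[OF u(3,1,4)] ang_add[OF u(4,2,5)]
      ang_add[OF u(5,3,1)] cr unfolding e_def by simp
  moreover have "ang o0 o1 + ang o1 o2 < 1" "ang o1 o2 + ang o2 o3 < 1" "ang o2 o3 + ang o3 o4 < 1"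
    "ang o3 o4 + ang o4 o0 < 1" "ang o4 o0 + ang o0 o1 < 1"
    using ang_add[OF u(1,2,3) right(1)] ang_add[OF u(2,3,4) right(2)] ang_add[OF u(3,4,5) right(3)]
      ang_add[OF u(4,5,1) right(4)] ang_add[OF u(5,1,2) right(5)] ang_range by metis+
  moreover have "o0 \<noteq> o3" using cr by auto
  hence "e > 0" unfolding e_def
    using ang_pos[OF u(1,4)] ang_range[of o3 o1] ang_range[of o1 o4] ang_range[of o4 o2] ang_range[of o2 o0]
    by linarith
  moreover have "e \<in> \<int>" unfolding e_def by (rule ang_cycle5_Ints[OF u(1,4,2,5,3)])
  ultimately have "e = 1" by (auto elim!: Ints_cases)
  thus ?thesis using sum by simp
qed

lemma circle_lift_unique:
  assumes "continuous_on UNIV F" "\<And>x. circ (F x) = f (circ x)" "F 0 \<in> {0..<1}"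
  shows "circle_lift f = F"
  unfolding circle_lift_def
proof (rule the_equality)
  show "continuous_on UNIV F \<and> (\<forall>x. circ (F x) = f (circ x)) \<and> F 0 \<in> {0..<1}"
    using assms by blast
  fix G assume G: "continuous_on UNIV G \<and> (\<forall>x. circ (G x) = f (circ x)) \<and> G 0 \<in> {0..<1}"
  define D where "D x = G x - F x" for x
  have cont: "continuous_on UNIV D" unfolding D_def using G assms(1) by (intro continuous_intros) auto
  have Ints: "D x \<in> \<int>" for x
    unfolding D_def by (rule circ_eq_imp_diff_Ints) (use G assms(2) in auto)
  have "D constant_on UNIV"
  proof (rule continuous_discrete_range_constant[OF connected_UNIV cont])
    fix x :: real
    have "1 \<le> norm (D y - D x)" if "D y \<noteq> D x" for y
      using Ints_nonzero_abs_ge1[of "D y - D x"] Ints[of x] Ints[of y] that by simp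
    thus "\<exists>e>0. \<forall>y. y \<in> UNIV \<and> D y \<noteq> D x \<longrightarrow> e \<le> norm (D y - D x)" by (intro exI[of _ 1]) auto
  qed
  moreover have "\<bar>D 0\<bar> < 1" using G assms(3) unfolding D_def by auto
  hence "D 0 = 0" using Ints[of 0] Ints_nonzero_abs_ge1[of "D 0"] by (cases "D 0 = 0") auto
  ultimately have "D x = 0" for x by (metis UNIV_I constant_on_def)
  thus "G = F" unfolding D_def by auto
qed

definition angular_lift :: "(complex \<Rightarrow> complex) \<Rightarrow> real \<Rightarrow> real" where
  "angular_lift f x = x + ang (circ x) (f (circ x))"

lemma circ_angular_lift:
  assumes "cmod (f (circ x)) = 1"
  shows "circ (angular_lift f x) = f (circ x)"
  unfolding angular_lift_def circ_add using ang_eq[OF norm_circ assms] by simp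

lemma angular_lift_add_1: "angular_lift f (x + 1) = angular_lift f x + 1"
  unfolding angular_lift_def using circ_add_Ints[of 1 x] by simp

lemma continuous_on_angular_lift:
  assumes cont: "continuous_on (sphere 0 1) f"
    and maps: "\<And>v. cmod v = 1 \<Longrightarrow> cmod (f v) = 1"
    and nf: "\<And>v. cmod v = 1 \<Longrightarrow> f v \<noteq> v"
  shows "continuous_on UNIV (angular_lift f)"
proof -
  define h where "h x = f (circ x) / circ x" for x
  have "h x \<notin> \<real>\<^sub>\<ge>\<^sub>0" for x
  proof
    assume "h x \<in> \<real>\<^sub>\<ge>\<^sub>0"
    moreover have "cmod (h x) = 1" unfolding h_def using maps[of "circ x"] by (simp add: norm_divide)
    ultimately have "h x = 1" by (auto simp: nonneg_Reals_def)
    hence "f (circ x) = circ x" unfolding h_def by (metis divide_eq_1_iff norm_circ norm_zero zero_neq_one)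
    thus False using nf[of "circ x"] by simp
  qed
  moreover have "continuous_on UNIV h"
    unfolding h_def circ_def
    by (intro continuous_intros continuous_on_compose2[OF cont]) (auto simp flip: circ_def)
  moreover have "continuous_on (- \<real>\<^sub>\<ge>\<^sub>0) Arg2pi"
    by (intro continuous_at_imp_continuous_on ballI continuous_at_Arg2pi) auto
  ultimately have "continuous_on UNIV (\<lambda>x. Arg2pi (h x))"
    by (intro continuous_on_compose2[of "- \<real>\<^sub>\<ge>\<^sub>0" Arg2pi UNIV h]) auto
  thus ?thesis
    unfolding angular_lift_def ang_def h_def by (intro continuous_intros) auto
qed

text \<open>Being continuous and injective, the lift is strictly monotone, and F (x + 1) = F x + 1
  makes it increasing.\<close>

lemma mono_angular_lift:
  assumes cont: "continuous_on (sphere 0 1) f"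
    and maps: "\<And>v. cmod v = 1 \<Longrightarrow> cmod (f v) = 1"
    and nf: "\<And>v. cmod v = 1 \<Longrightarrow> f v \<noteq> v"
    and inj: "inj_on f (sphere 0 1)"
  shows "mono (angular_lift f)"
proof (rule monoI)
  let ?F = "angular_lift f"
  have "inj ?F"
  proof (rule injI)
    fix x y assume e: "?F x = ?F y"
    hence "f (circ x) = f (circ y)" using circ_angular_lift maps norm_circ by metis
    hence "circ x = circ y" using inj unfolding inj_on_def by simp
    thus "x = y" using e unfolding angular_lift_def by simp
  qed
  fix x y :: real assume "x \<le> y"
  moreover have "?F x < ?F y" if "x < y"
    using continuous_inj_imp_mono[OF that _
        continuous_on_subset[OF continuous_on_angular_lift[OF cont maps nf]] inj_on_subset[OF \<open>inj ?F\<close>],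
        of "y + 1"]
      angular_lift_add_1[of f y] by auto
  ultimately show "?F x \<le> ?F y" by (cases "x = y") auto
qed

lemma circle_lift_eq_angular_lift:
  assumes cont: "continuous_on (sphere 0 1) f"
    and maps: "\<And>v. cmod v = 1 \<Longrightarrow> cmod (f v) = 1"
    and nf: "\<And>v. cmod v = 1 \<Longrightarrow> f v \<noteq> v"
  shows "circle_lift f = angular_lift f"
proof (rule circle_lift_unique)
  show "continuous_on UNIV (angular_lift f)" by (rule continuous_on_angular_lift[OF cont maps nf])
  show "circ (angular_lift f x) = f (circ x)" for x by (rule circ_angular_lift[of f, OF maps[OF norm_circ]])
  show "angular_lift f 0 \<in> {0..<1}" unfolding angular_lift_def using ang_range by simp
qed

lemma lift_add_of_int:
  fixes F :: "real \<Rightarrow> real"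
  assumes "\<And>x. F (x + 1) = F x + 1"
  shows "F (x + of_int k) = F x + of_int k"
proof (induction k rule: int_induct[where k = 0])
  case (step1 i)
  thus ?case using assms[of "x + of_int i"] by (simp add: add.assoc)
next
  case (step2 i)
  thus ?case using assms[of "x + of_int (i - 1)"] by (simp add: algebra_simps)
qed simp

lemma funpow_lift_add_of_int:
  fixes F :: "real \<Rightarrow> real"
  assumes "\<And>x. F (x + 1) = F x + 1"
  shows "(F ^^ n) (x + of_int k) = (F ^^ n) x + of_int k"
  by (induction n) (simp_all add: lift_add_of_int[of F, OF assms])

lemma LIMSEQ_div_of_bounded_deviation:
  assumes "\<And>n. \<bar>g n - real n * r\<bar> \<le> C"
  shows "(\<lambda>n. g n / real n) \<longlonglongrightarrow> r"
proof -
  have "(\<lambda>n. (g n - real n * r) / real n) \<longlonglongrightarrow> 0"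
  proof (rule Lim_null_comparison)
    have "norm ((g n - real n * r) / real n) \<le> C / real n" for n
      unfolding real_norm_def abs_divide abs_of_nat by (rule divide_right_mono[OF assms]) simp
    thus "\<forall>\<^sub>F n in sequentially. norm ((g n - real n * r) / real n) \<le> C / real n" by simp
    show "(\<lambda>n. C / real n) \<longlonglongrightarrow> 0"
      by (rule tendsto_divide_0[OF tendsto_const filterlim_at_top_imp_at_infinity[OF filterlim_real_sequentially]])
  qed
  hence "(\<lambda>n. r + (g n - real n * r) / real n) \<longlonglongrightarrow> r + 0" by (intro tendsto_add tendsto_const)
  moreover have "\<forall>\<^sub>F n in sequentially. r + (g n - real n * r) / real n = g n / real n"
    using eventually_gt_at_top[of 0] by eventually_elim (simp add: field_simps)
  ultimately show ?thesis by (simp add: tendsto_cong)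
qed

text \<open>A lift of degree one with a point x0 satisfying F^q x0 = x0 + p has rotation number p/q:
  writing n = q m + r, the orbit of x0 stays within bounded distance of x0 + n p/q, and every
  other orbit stays within distance 1 of a translate of it by monotonicity.\<close>

lemma lift_rotation_limit_periodic:
  fixes F :: "real \<Rightarrow> real"
  assumes mono: "mono F" and add1: "\<And>x. F (x + 1) = F x + 1"
    and q: "q > 0" and per: "(F ^^ q) x0 = x0 + of_int p"
  shows "(\<lambda>n. ((F ^^ n) x - x) / real n) \<longlonglongrightarrow> p / q"
proof (rule LIMSEQ_div_of_bounded_deviation)
  note shift = funpow_lift_add_of_int[of F, OF add1]
  have per_m: "(F ^^ (q * m)) x0 = x0 + of_int (int m * p)" for m
  proof (induction m)
    case (Suc m)
    have "(F ^^ (q * Suc m)) x0 = (F ^^ q) ((F ^^ (q * m)) x0)"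
      by (simp add: funpow_add mult.commute[of q])
    also have "\<dots> = (F ^^ q) x0 + of_int (int m * p)" unfolding Suc shift ..
    finally show ?case using per by (simp add: algebra_simps)
  qed simp
  define B where "B = (\<Sum>r<q. \<bar>(F ^^ r) x0 - x0 - real r * (p / q)\<bar>)"
  have orbit: "\<bar>(F ^^ n) x0 - x0 - real n * (p / q)\<bar> \<le> B" for n
  proof -
    define m r where "m = n div q" and "r = n mod q"
    have n: "n = r + q * m" and "r < q" unfolding m_def r_def using q by simp_all
    have "(F ^^ n) x0 = (F ^^ r) ((F ^^ (q * m)) x0)" unfolding n by (simp add: funpow_add)
    also have "\<dots> = (F ^^ r) x0 + of_int (int m * p)" unfolding per_m shift ..
    finally have "(F ^^ n) x0 - x0 - real n * (p / q) = (F ^^ r) x0 - x0 - real r * (p / q)"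
      unfolding n using q by (simp add: field_simps)
    moreover have "\<bar>(F ^^ r) x0 - x0 - real r * (p / q)\<bar> \<le> B"
      unfolding B_def by (rule member_le_sum) (use \<open>r < q\<close> in auto)
    ultimately show ?thesis by simp
  qed
  define k where "k = \<lfloor>x - x0\<rfloor>"
  have k: "x0 + of_int k \<le> x" "x \<le> (x0 + 1) + of_int k" unfolding k_def by linarith+
  fix n
  have "(F ^^ n) (x0 + of_int k) \<le> (F ^^ n) x" by (rule funpow_mono[OF mono k(1)])
  hence lo: "(F ^^ n) x0 + of_int k \<le> (F ^^ n) x" unfolding shift .
  have "(F ^^ n) x \<le> (F ^^ n) ((x0 + 1) + of_int k)" by (rule funpow_mono[OF mono k(2)])
  hence hi: "(F ^^ n) x \<le> (F ^^ n) x0 + 1 + of_int k"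
    unfolding shift using shift[of n x0 1] by simp
  show "\<bar>(F ^^ n) x - x - real n * (p / q)\<bar> \<le> B + 1"
    using orbit[of n] k lo hi by linarith
qed

lemma funpow_angular_lift:
  assumes maps: "\<And>v. cmod v = 1 \<Longrightarrow> cmod (f v) = 1"
  shows "circ ((angular_lift f ^^ n) x) = (f ^^ n) (circ x) \<and>
    (angular_lift f ^^ n) x = x + (\<Sum>i<n. ang ((f ^^ i) (circ x)) ((f ^^ Suc i) (circ x)))"
proof (induction n)
  case (Suc n)
  define y where "y = (angular_lift f ^^ n) x"
  have y: "circ y = (f ^^ n) (circ x)"
    "y = x + (\<Sum>i<n. ang ((f ^^ i) (circ x)) ((f ^^ Suc i) (circ x)))"
    using Suc unfolding y_def by auto
  have "cmod ((f ^^ n) (circ x)) = 1" by (induction n) (simp_all add: maps)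
  hence "circ (angular_lift f y) = f (circ y)" using maps y(1) by (intro circ_angular_lift) simp
  moreover have "angular_lift f y = y + ang (circ y) (f (circ y))" by (simp add: angular_lift_def)
  moreover have "(angular_lift f ^^ Suc n) x = angular_lift f y" by (simp add: y_def)
  ultimately show ?case using y by simp
qed simp

theorem has_rotation_number_pentagram:
  assumes cont: "continuous_on (sphere 0 1) f"
    and maps: "\<And>v. cmod v = 1 \<Longrightarrow> cmod (f v) = 1"
    and nf: "\<And>v. cmod v = 1 \<Longrightarrow> f v \<noteq> v"
    and inj: "inj_on f (sphere 0 1)"
    and u: "cmod o0 = 1" "cmod o1 = 1" "cmod o2 = 1" "cmod o3 = 1" "cmod o4 = 1"
    and orb: "f o0 = o1" "f o1 = o2" "f o2 = o3" "f o3 = o4" "f o4 = o0"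
    and pent: "pentagram o0 o1 o2 o3 o4"
  shows "has_rotation_number f (2 / 5)"
proof -
  let ?F = "angular_lift f"
  define x0 where "x0 = Arg2pi o0 / (2 * pi)"
  have "circ x0 = o0" unfolding x0_def circ_def using cis_Arg2pi_unit[OF u(1)] by simp
  hence "(?F ^^ 5) x0 = x0 + (\<Sum>i<5. ang ((f ^^ i) o0) ((f ^^ Suc i) o0))"
    using funpow_angular_lift[OF maps, where n = 5 and x = x0] by simp
  moreover have "(f ^^ 1) o0 = o1" "(f ^^ 2) o0 = o2" "(f ^^ 3) o0 = o3" "(f ^^ 4) o0 = o4"
    "(f ^^ 5) o0 = o0" using orb by (simp_all add: numeral_eq_Suc)
  ultimately have "(?F ^^ 5) x0 = x0 + (ang o0 o1 + ang o1 o2 + ang o2 o3 + ang o3 o4 + ang o4 o0)"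
    by (simp add: numeral_eq_Suc add.assoc)
  hence "(?F ^^ 5) x0 = x0 + of_int 2" using pentagram_ang_sum[OF u pent] by simp
  hence "(\<lambda>n. ((?F ^^ n) x - x) / real n) \<longlonglongrightarrow> real_of_int 2 / real 5" for x
    by (intro lift_rotation_limit_periodic[OF mono_angular_lift[OF cont maps nf inj] angular_lift_add_1])
       simp_all
  hence "(\<lambda>n. ((?F ^^ n) x - x) / real n) \<longlonglongrightarrow> 2 / 5" for x by simp
  thus ?thesis
    unfolding has_rotation_number_def by (simp add: circle_lift_eq_angular_lift[OF cont maps nf])
qed

section \<open>The Klein distance\<close>

definition klein_cosh_sq :: "complex \<Rightarrow> complex \<Rightarrow> real" where
  "klein_cosh_sq a b = (1 - Re (cnj a * b))^2 / ((1 - (cmod a)^2) * (1 - (cmod b)^2))"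

lemma cosh_half_abs_ln_sq:
  fixes X :: real
  assumes X: "X > 0"
  shows "(cosh (\<bar>ln X\<bar> / 2))^2 = (X + 1)^2 / (4 * X)"
proof -
  have c: "cosh (\<bar>ln X\<bar> / 2) = cosh (ln X / 2)"
  proof (cases "ln X \<ge> 0")
    case True thus ?thesis by simp
  next
    case False
    hence "\<bar>ln X\<bar> / 2 = - (ln X / 2)" by simp
    thus ?thesis by (metis cosh_minus)
  qed
  have l: "ln X / 2 = ln (sqrt X)" using X by (simp add: ln_sqrt)
  have sX: "sqrt X > 0" using X by simp
  have sXX: "sqrt X * sqrt X = X" using X by simp
  have "cosh (ln (sqrt X)) = (sqrt X + inverse (sqrt X)) / 2" by (rule cosh_ln_real[OF sX])
  hence "(cosh (ln (sqrt X)))^2 = ((sqrt X + inverse (sqrt X)) / 2)^2" by (rule arg_cong)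
  also have "\<dots> = (sqrt X * sqrt X + 2 + 1 / (sqrt X * sqrt X)) / 4"
    using sX by (simp add: power2_eq_square field_simps)
  also have "\<dots> = (X + 2 + 1 / X) / 4" unfolding sXX ..
  also have "\<dots> = (X + 1)^2 / (4 * X)" using X by (simp add: field_simps power2_eq_square)
  finally show ?thesis unfolding c l .
qed

lemma quadratic_roots_neg_pos:
  fixes n p q t :: real
  assumes n: "n > 0" and q: "q < 0"
  defines "D \<equiv> p^2 - n * q"
  defines "t1 \<equiv> (- p - sqrt D) / n" and "t2 \<equiv> (- p + sqrt D) / n"
  shows "D > 0" and "n * t^2 + 2 * p * t + q = n * (t - t1) * (t - t2)"
    and "t1 + t2 = - 2 * p / n" and "t1 * t2 = q / n" and "t1 < 0" and "0 < t2"
proof -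
  have nq: "n * q < 0" by (rule mult_pos_neg[OF n q])
  have p2: "p^2 \<ge> 0" by simp
  show D: "D > 0" unfolding D_def using nq p2 by linarith
  have sDD: "sqrt D * sqrt D = D" using D by simp
  show s: "t1 + t2 = - 2 * p / n" unfolding t1_def t2_def using n by (simp add: field_simps)
  have pr0: "(- p - sqrt D) * (- p + sqrt D) = p^2 - D"
    using sDD by (simp add: algebra_simps power2_eq_square)
  have "t1 * t2 = ((- p - sqrt D) * (- p + sqrt D)) / (n * n)" unfolding t1_def t2_def by simp
  also have "\<dots> = (p^2 - D) / (n * n)" unfolding pr0 ..
  also have "\<dots> = q / n" unfolding D_def using n by (simp add: field_simps power2_eq_square)
  finally show pr: "t1 * t2 = q / n" .
  show "n * t^2 + 2 * p * t + q = n * (t - t1) * (t - t2)"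
  proof -
    have "n * (t - t1) * (t - t2) = n * t^2 - n * (t1 + t2) * t + n * (t1 * t2)"
      by (simp add: algebra_simps power2_eq_square)
    also have "\<dots> = n * t^2 + 2 * p * t + q" unfolding s pr using n by simp
    finally show ?thesis by simp
  qed
  have "\<bar>p\<bar> < sqrt D"
  proof -
    have "p^2 < D" unfolding D_def using nq by simp
    hence "sqrt (p^2) < sqrt D" by (rule real_sqrt_less_mono)
    thus ?thesis by simp
  qed
  hence a1: "- p - sqrt D < 0" and a2: "- p + sqrt D > 0" by linarith+
  show "t1 < 0" unfolding t1_def using a1 n by (rule divide_neg_pos)
  show "0 < t2" unfolding t2_def using a2 n by (rule divide_pos_pos)
qed

lemma chord_line_param:
  assumes a: "cmod a < 1" and b: "cmod b < 1" and ab: "a \<noteq> b"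
  defines "u \<equiv> b - a"
  defines "n \<equiv> (cmod u)^2" and "p \<equiv> Re (cnj a * u)" and "q \<equiv> (cmod a)^2 - 1"
  defines "D \<equiv> p^2 - n * q"
  defines "t1 \<equiv> (- p - sqrt D) / n" and "t2 \<equiv> (- p + sqrt D) / n"
  shows "\<And>t. cmod (a + of_real t * u) = 1 \<longleftrightarrow> t = t1 \<or> t = t2"
    and "t1 < 0" and "1 < t2" and "t1 + t2 = - 2 * p / n" and "t1 * t2 = q / n"
    and "n > 0" and "q < 0" and "p + q = Re (cnj a * b) - 1" and "2 * p + q + n = (cmod b)^2 - 1"
proof -
  have u: "u \<noteq> 0" unfolding u_def using ab by simp
  show n: "n > 0" unfolding n_def using u by simp
  have a2: "(cmod a)^2 < 1" using a by (simp add: power_less_one_iff)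
  show q: "q < 0" unfolding q_def using a2 by simp
  note QR = quadratic_roots_neg_pos[OF n q, where p = p, folded D_def, folded t1_def t2_def]
  have QR2: "n * t^2 + 2 * p * t + q = n * (t - t1) * (t - t2)" for t
    using quadratic_roots_neg_pos(2)[OF n q, where p = p and t = t, folded D_def, folded t1_def t2_def] .
  show s: "t1 + t2 = - 2 * p / n" by (rule QR(3))
  show pr: "t1 * t2 = q / n" by (rule QR(4))
  show t1: "t1 < 0" by (rule QR(5))
  have sq: "(cmod (a + of_real t * u))^2 = 1 + (n * t^2 + 2 * p * t + q)" for t
    using norm_add_mult_of_real_sq[of a t u] unfolding n_def p_def q_def by (simp add: algebra_simps)
  show "cmod (a + of_real t * u) = 1 \<longleftrightarrow> t = t1 \<or> t = t2" for t
  proof -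
    have "cmod (a + of_real t * u) = 1 \<longleftrightarrow> (cmod (a + of_real t * u))^2 = 1"
      using power2_eq_iff_nonneg[OF norm_ge_zero zero_le_one, of "a + of_real t * u"] by simp
    also have "\<dots> \<longleftrightarrow> n * t^2 + 2 * p * t + q = 0" unfolding sq by simp
    also have "\<dots> \<longleftrightarrow> n * (t - t1) * (t - t2) = 0" using QR2[of t] by simp
    also have "\<dots> \<longleftrightarrow> t = t1 \<or> t = t2" using n by auto
    finally show ?thesis .
  qed
  have bu: "a + of_real 1 * u = b" unfolding u_def by simp
  have "(cmod b)^2 = 1 + (n * 1^2 + 2 * p * 1 + q)" using sq[of 1] unfolding bu .
  moreover have b2: "(cmod b)^2 < 1" using b by (simp add: power_less_one_iff)
  ultimately have f1: "n + 2 * p + q < 0" by simp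
  show "2 * p + q + n = (cmod b)^2 - 1" using sq[of 1] unfolding bu by simp
  have "n * (1 - t1) * (1 - t2) < 0" using f1 QR2[of 1] by simp
  moreover have "n * (1 - t1) > 0" using n t1 by simp
  ultimately show "1 < t2" using n t1 by (simp add: mult_less_0_iff)
  show "p + q = Re (cnj a * b) - 1"
      unfolding p_def q_def u_def using Re_cnj_mult_self[of a] by (simp add: right_diff_distrib)
qed

lemma chord_ends_cases:
  assumes ends: "\<And>v. v \<in> sphere 0 1 \<and> v \<in> line_thru a b \<longleftrightarrow> v = e1 \<or> v = e2" and "e1 \<noteq> e2"
  shows "chord_end1 a b = e1 \<and> chord_end2 a b = e2 \<or> chord_end1 a b = e2 \<and> chord_end2 a b = e1"
proof -
  have "chord_end1 a b \<in> sphere 0 1 \<and> chord_end1 a b \<in> line_thru a b"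
    unfolding chord_end1_def by (rule someI[of _ e1]) (use ends in blast)
  hence 1: "chord_end1 a b = e1 \<or> chord_end1 a b = e2" using ends by blast
  have "\<exists>v. v \<in> sphere 0 1 \<and> v \<in> line_thru a b \<and> v \<noteq> chord_end1 a b"
    using 1 ends assms(2) by metis
  hence "chord_end2 a b \<in> sphere 0 1 \<and> chord_end2 a b \<in> line_thru a b \<and> chord_end2 a b \<noteq> chord_end1 a b"
    unfolding chord_end2_def by (rule someI_ex)
  thus ?thesis using 1 ends by blast
qed

lemma chord_ends_param:
  assumes ab: "a \<noteq> b" and "t1 \<noteq> t2"
    and circle: "\<And>t. cmod (a + of_real t * (b - a)) = 1 \<longleftrightarrow> t = t1 \<or> t = t2"
  defines "e1 \<equiv> a + of_real t1 * (b - a)" and "e2 \<equiv> a + of_real t2 * (b - a)"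
  shows "chord_end1 a b = e1 \<and> chord_end2 a b = e2 \<or> chord_end1 a b = e2 \<and> chord_end2 a b = e1"
proof (rule chord_ends_cases)
  show "e1 \<noteq> e2" unfolding e1_def e2_def using assms(1,2) by auto
  fix v
  have "v \<in> line_thru a b \<longleftrightarrow> (\<exists>t. v = a + of_real t * (b - a))" unfolding line_thru_def by auto
  hence "v \<in> sphere 0 1 \<and> v \<in> line_thru a b \<longleftrightarrow>
      (\<exists>t. v = a + of_real t * (b - a) \<and> cmod (a + of_real t * (b - a)) = 1)"
    by auto
  also have "\<dots> \<longleftrightarrow> (\<exists>t. v = a + of_real t * (b - a) \<and> (t = t1 \<or> t = t2))" using circle by simp
  finally show "v \<in> sphere 0 1 \<and> v \<in> line_thru a b \<longleftrightarrow> v = e1 \<or> v = e2" unfolding e1_def e2_def by auto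
qed

lemma dK_chord_param:
  assumes ab: "a \<noteq> b" and t1: "t1 < 0" and t2: "1 < t2"
    and circle: "\<And>t. cmod (a + of_real t * (b - a)) = 1 \<longleftrightarrow> t = t1 \<or> t = t2"
  shows "dK a b = \<bar>ln (((1 - t1) * t2) / ((- t1) * (t2 - 1)))\<bar> / 2"
proof -
  define u where "u = b - a"
  have u: "cmod u > 0" unfolding u_def using ab by simp
  define e1 where "e1 = a + of_real t1 * u"
  define e2 where "e2 = a + of_real t2 * u"
  have ends: "chord_end1 a b = e1 \<and> chord_end2 a b = e2 \<or> chord_end1 a b = e2 \<and> chord_end2 a b = e1"
    unfolding e1_def e2_def u_def using chord_ends_param[OF ab _ circle] t1 t2 by simp
  have nb: "cmod (b - (a + of_real t * u)) = \<bar>1 - t\<bar> * cmod u" for t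
  proof -
    have "b - (a + of_real t * u) = of_real (1 - t) * u" unfolding u_def by (simp add: algebra_simps)
    thus ?thesis by (simp only: norm_mult norm_of_real)
  qed
  have na: "cmod (a - (a + of_real t * u)) = \<bar>t\<bar> * cmod u" for t
    by (simp add: norm_mult)
  define X where "X = ((1 - t1) * t2) / ((- t1) * (t2 - 1))"
  have "X > 0" unfolding X_def using t1 t2 by (intro divide_pos_pos mult_pos_pos) auto
  define ratio where "ratio = (cmod (b - chord_end1 a b) * cmod (a - chord_end2 a b))
      / (cmod (a - chord_end1 a b) * cmod (b - chord_end2 a b))"
  have "ratio = X \<or> ratio = inverse X"
  proof (rule disjE[OF ends])
    assume e: "chord_end1 a b = e1 \<and> chord_end2 a b = e2"
    have "ratio = (\<bar>1 - t1\<bar> * cmod u * (\<bar>t2\<bar> * cmod u)) / (\<bar>t1\<bar> * cmod u * (\<bar>1 - t2\<bar> * cmod u))"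
      unfolding ratio_def e[THEN conjunct1] e[THEN conjunct2] e1_def e2_def nb na ..
    also have "\<dots> = X" unfolding X_def using t1 t2 u by (simp add: field_simps)
    finally show ?thesis ..
  next
    assume e: "chord_end1 a b = e2 \<and> chord_end2 a b = e1"
    have "ratio = (\<bar>1 - t2\<bar> * cmod u * (\<bar>t1\<bar> * cmod u)) / (\<bar>t2\<bar> * cmod u * (\<bar>1 - t1\<bar> * cmod u))"
      unfolding ratio_def e[THEN conjunct1] e[THEN conjunct2] e1_def e2_def nb na ..
    also have "\<dots> = inverse X" unfolding X_def using t1 t2 u by (simp add: field_simps)
    finally show ?thesis ..
  qed
  moreover have "dK a b = \<bar>ln ratio\<bar> / 2" unfolding dK_def ratio_def using ab by (simp add: Let_def)
  ultimately show ?thesis using \<open>X > 0\<close> unfolding X_def[symmetric] by (auto simp: ln_inverse)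
qed

lemma cross_ratio_vieta:
  fixes n p q t1 t2 :: real
  assumes n: "n > 0" and t1: "t1 < 0" and t2: "1 < t2"
    and sum: "t1 + t2 = - 2 * p / n" and prod: "t1 * t2 = q / n" and nz: "q * (2 * p + q + n) \<noteq> 0"
  defines "X \<equiv> ((1 - t1) * t2) / ((- t1) * (t2 - 1))"
  shows "(X + 1)^2 / (4 * X) = (p + q)^2 / (q * (2 * p + q + n))"
proof -
  define N where "N = (1 - t1) * t2"
  define M where "M = (- t1) * (t2 - 1)"
  have "N > 0" "M > 0" unfolding N_def M_def using t1 t2 by (simp_all add: mult_neg_pos)
  hence "(X + 1)^2 / (4 * X) = (N + M)^2 / (4 * (N * M))"
    unfolding X_def N_def[symmetric] M_def[symmetric] by (simp add: field_simps power2_eq_square)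
  also have "N + M = - 2 * (p + q) / n"
    unfolding N_def M_def using n sum prod by (simp add: field_simps)
  also have "N * M = (- (t1 * t2)) * ((t1 + t2) - t1 * t2 - 1)"
    unfolding N_def M_def by (simp add: algebra_simps)
  also have "\<dots> = q * (2 * p + q + n) / n^2"
    unfolding sum prod using n by (simp add: field_simps power2_eq_square)
  also have "(- 2 * (p + q) / n)^2 / (4 * (q * (2 * p + q + n) / n^2)) = (p + q)^2 / (q * (2 * p + q + n))"
  proof -
    have cancel: "(- 2 * s / n)^2 / (4 * (K / n^2)) = s^2 / K" if "n \<noteq> 0" "K \<noteq> 0" for s K :: real
      using that by (simp add: field_simps power2_eq_square)
    show ?thesis by (rule cancel) (use n nz in auto)
  qed
  finally show ?thesis .
qed

lemma cosh_dK_sq: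
  assumes a: "cmod a < 1" and b: "cmod b < 1"
  shows "(cosh (dK a b))^2 = klein_cosh_sq a b"
proof (cases "a = b")
  case True
  have "(cmod a)^2 < 1" using a by (simp add: power_less_one_iff)
  thus ?thesis unfolding True dK_def klein_cosh_sq_def Re_cnj_mult_self by (simp add: power2_eq_square)
next
  case ab: False
  define u where "u = b - a"
  define n where "n = (cmod u)^2"
  define p where "p = Re (cnj a * u)"
  define q where "q = (cmod a)^2 - 1"
  define D where "D = p^2 - n * q"
  define t1 where "t1 = (- p - sqrt D) / n"
  define t2 where "t2 = (- p + sqrt D) / n"
  note CS = chord_line_param[OF a b ab, folded u_def, folded n_def p_def q_def, folded D_def,
      folded t1_def t2_def]
  have "(cmod b)^2 < 1" using b by (simp add: power_less_one_iff)
  hence nz: "q * (2 * p + q + n) \<noteq> 0" using CS(7,9) by simp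
  have "(cosh (dK a b))^2
      = (((1 - t1) * t2) / ((- t1) * (t2 - 1)) + 1)^2 / (4 * (((1 - t1) * t2) / ((- t1) * (t2 - 1))))"
    unfolding dK_chord_param[OF ab CS(2,3) CS(1)[unfolded u_def]] using CS(2,3)
    by (intro cosh_half_abs_ln_sq divide_pos_pos mult_pos_pos) auto
  also have "\<dots> = (p + q)^2 / (q * (2 * p + q + n))" by (rule cross_ratio_vieta[OF CS(6,2,3,4,5) nz])
  also have "(p + q)^2 = (1 - Re (cnj a * b))^2" unfolding CS(8) by (simp add: power2_commute)
  also have "q * (2 * p + q + n) = (1 - (cmod a)^2) * (1 - (cmod b)^2)"
    unfolding CS(9) by (simp add: q_def algebra_simps)
  finally show ?thesis unfolding klein_cosh_sq_def .
qed

lemma dK_nonneg: "dK a b \<ge> 0"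
  unfolding dK_def by (simp add: Let_def)

lemma cosh_sq_inj_nonneg:
  fixes x y :: real
  assumes "x \<ge> 0" "y \<ge> 0" "(cosh x)^2 = (cosh y)^2"
  shows "x = y"
proof -
  have "cosh x > 0" "cosh y > 0" using cosh_real_ge_1[of x] cosh_real_ge_1[of y] by auto
  hence "cosh x = cosh y" using assms(3) by (simp add: power2_eq_iff_nonneg)
  thus ?thesis using assms(1,2) cosh_real_nonneg_le_iff by (metis order_antisym order_refl)
qed

lemma dK_eq_iff_cosh_sq_eq:
  assumes "cmod a < 1" "cmod b < 1" "cmod c < 1" "cmod d < 1"
  shows "dK a b = dK c d \<longleftrightarrow> klein_cosh_sq a b = klein_cosh_sq c d"
  using cosh_sq_inj_nonneg[OF dK_nonneg dK_nonneg, of a b c d] cosh_dK_sq assms by metis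

lemma dK_le_if_cosh_sq_le:
  assumes "cmod a < 1" "cmod b < 1" "cmod c < 1" "klein_cosh_sq a b \<le> klein_cosh_sq a c"
  shows "dK a b \<le> dK a c"
proof -
  have "(cosh (dK a b))^2 \<le> (cosh (dK a c))^2" using cosh_dK_sq assms by simp
  moreover have "cosh (dK a c) > 0" using cosh_real_ge_1[of "dK a c"] by auto
  ultimately have "cosh (dK a b) \<le> cosh (dK a c)" by (simp add: power_mono_iff)
  thus ?thesis using cosh_real_nonneg_le_iff[OF dK_nonneg dK_nonneg] by simp
qed

lemma dK_commute:
  assumes "cmod a < 1" "cmod b < 1"
  shows "dK a b = dK b a"
  using assms by (simp add: dK_eq_iff_cosh_sq_eq klein_cosh_sq_def algebra_simps)

lemma deltaK_commute:
  assumes "P \<noteq> Q"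
  shows "deltaK P Q R = deltaK Q P R"
  unfolding deltaK_def line_thru_commute[OF assms] ..

section \<open>Isometries of the Klein model\<close>

text \<open>The hyperbolic translation of the Klein model along the real axis moving h to 0
  (a projective map of the disk).\<close>

definition klein_shift :: "real \<Rightarrow> complex \<Rightarrow> complex" where
  "klein_shift h z = Complex ((Re z - h) / (1 - h * Re z)) (Im z * sqrt (1 - h^2) / (1 - h * Re z))"

lemma klein_shift_denom_pos:
  assumes "\<bar>h\<bar> < 1" "cmod z \<le> 1"
  shows "1 - h * Re z > 0"
proof -
  have "\<bar>h * Re z\<bar> \<le> \<bar>h\<bar>"
    using abs_Re_le_cmod[of z] assms(2) by (simp add: abs_mult mult_left_le)
  thus ?thesis using assms(1) by linarith
qed

lemma klein_shift_Re: "Re (klein_shift h z) = (Re z - h) / (1 - h * Re z)"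
  unfolding klein_shift_def by simp

lemma klein_shift_Im: "Im (klein_shift h z) = Im z * sqrt (1 - h^2) / (1 - h * Re z)"
  unfolding klein_shift_def by simp

lemma klein_shift_norm_identity:
  fixes x y h d :: real
  assumes d0: "d \<noteq> 0" and dd: "d = 1 - h * x"
  shows "1 - ((x - h) / d)^2 - y^2 * (1 - h^2) / d^2 = (1 - h^2) * (1 - x^2 - y^2) / d^2"
proof -
  have "1 - ((x - h) / d)^2 - y^2 * (1 - h^2) / d^2 = (d^2 - (x - h)^2 - y^2 * (1 - h^2)) / d^2"
    using d0 by (simp add: field_simps power2_eq_square)
  also have "d^2 - (x - h)^2 - y^2 * (1 - h^2) = (1 - h^2) * (1 - x^2 - y^2)"
    unfolding dd by (simp add: algebra_simps power2_eq_square)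
  finally show ?thesis .
qed

lemma klein_shift_inverse_identity:
  fixes x h d :: real
  assumes d0: "d \<noteq> 0" and dd: "d = 1 - h * x" and hh: "1 - h^2 \<noteq> 0"
  shows "1 + h * ((x - h) / d) = (1 - h^2) / d" and "((x - h) / d + h) / (1 + h * ((x - h) / d)) = x"
proof -
  have a: "1 + h * ((x - h) / d) = (d + h * (x - h)) / d" using d0 by (simp add: field_simps)
  have a2: "d + h * (x - h) = 1 - h^2" unfolding dd by (simp add: algebra_simps power2_eq_square)
  show e1: "1 + h * ((x - h) / d) = (1 - h^2) / d" unfolding a a2 ..
  have b: "(x - h) / d + h = (x - h + h * d) / d" using d0 by (simp add: field_simps)
  have b2: "x - h + h * d = x * (1 - h^2)" unfolding dd by (simp add: algebra_simps power2_eq_square)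
  show "((x - h) / d + h) / (1 + h * ((x - h) / d)) = x" unfolding e1 b b2 using d0 hh by simp
qed

lemma klein_shift_cross_identity:
  fixes xa ya xb yb xc yc h s da db dc :: real
  assumes da: "da = 1 - h * xa" and db: "db = 1 - h * xb" and dc: "dc = 1 - h * xc"
    and na: "da \<noteq> 0" and nb: "db \<noteq> 0" and nc: "dc \<noteq> 0"
  shows "((xb - h) / db - (xa - h) / da) * (yc * s / dc - ya * s / da)
       - (yb * s / db - ya * s / da) * ((xc - h) / dc - (xa - h) / da)
     = s * (1 - h^2) * ((xb - xa) * (yc - ya) - (yb - ya) * (xc - xa)) / (da * db * dc)"
proof -
  have diff: "(u - h) / du - (v - h) / dv = (1 - h^2) * (u - v) / (dv * du)"
    if "du = 1 - h * u" "dv = 1 - h * v" "du \<noteq> 0" "dv \<noteq> 0" for u v du dv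
  proof -
    have "(u - h) / du - (v - h) / dv = ((u - h) * dv - (v - h) * du) / (dv * du)"
      using that(3,4) by (simp add: field_simps)
    also have "(u - h) * dv - (v - h) * du = (1 - h^2) * (u - v)"
      unfolding that(1,2) by (simp add: algebra_simps power2_eq_square)
    finally show ?thesis .
  qed
  note e1 = diff[OF db da nb na] and e2 = diff[OF dc da nc na]
  have e3: "yc * s / dc - ya * s / da = s * (yc * da - ya * dc) / (da * dc)"
    using na nc by (simp add: field_simps)
  have e4: "yb * s / db - ya * s / da = s * (yb * da - ya * db) / (da * db)"
    using na nb by (simp add: field_simps)
  have key: "(xb - xa) * (yc * da - ya * dc) - (yb * da - ya * db) * (xc - xa)
      = da * ((xb - xa) * (yc - ya) - (yb - ya) * (xc - xa))"
    unfolding da db dc by (simp add: algebra_simps)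
  have "(1 - h^2) * (xb - xa) / (da * db) * (s * (yc * da - ya * dc) / (da * dc))
      - s * (yb * da - ya * db) / (da * db) * ((1 - h^2) * (xc - xa) / (da * dc))
      = s * (1 - h^2) * ((xb - xa) * (yc * da - ya * dc) - (yb * da - ya * db) * (xc - xa)) / (da * da * db * dc)"
    using na nb nc by (simp add: field_simps)
  also have "\<dots> = s * (1 - h^2) * ((xb - xa) * (yc - ya) - (yb - ya) * (xc - xa)) / (da * db * dc)"
    unfolding key using na nb nc by (simp add: field_simps)
  finally show ?thesis unfolding e1 e2 e3 e4 .
qed

lemma klein_shift_Im_mult:
  assumes "\<bar>h\<bar> < 1"
  shows "Im (klein_shift h a) * Im (klein_shift h b) = Im a * Im b * (1 - h^2) / ((1 - h * Re a) * (1 - h * Re b))"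
proof -
  have "1 - h^2 > 0" using assms by (simp add: abs_square_less_1)
  hence s: "sqrt (1 - h^2) * sqrt (1 - h^2) = 1 - h^2" by simp
  have "Im (klein_shift h a) * Im (klein_shift h b)
      = Im a * Im b * (sqrt (1 - h^2) * sqrt (1 - h^2)) / ((1 - h * Re a) * (1 - h * Re b))"
    unfolding klein_shift_Im by simp
  thus ?thesis unfolding s .
qed

lemma one_minus_norm_klein_shift_sq:
  assumes h: "\<bar>h\<bar> < 1" and z: "cmod z \<le> 1"
  shows "1 - (cmod (klein_shift h z))^2 = (1 - h^2) * (1 - (cmod z)^2) / (1 - h * Re z)^2"
proof -
  have d: "1 - h * Re z > 0" by (rule klein_shift_denom_pos[OF h z])
  have i: "(Im (klein_shift h z))^2 = (Im z)^2 * (1 - h^2) / (1 - h * Re z)^2"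
    using klein_shift_Im_mult[OF h, of z z] by (simp add: power2_eq_square)
  have "1 - (cmod (klein_shift h z))^2
      = 1 - (Re (klein_shift h z))^2 - (Im (klein_shift h z))^2" by (simp add: cmod_power2)
  also have "\<dots> = 1 - ((Re z - h) / (1 - h * Re z))^2 - (Im z)^2 * (1 - h^2) / (1 - h * Re z)^2"
    unfolding i klein_shift_Re ..
  also have "\<dots> = (1 - h^2) * (1 - (Re z)^2 - (Im z)^2) / (1 - h * Re z)^2"
    by (rule klein_shift_norm_identity) (use d in auto)
  finally show ?thesis by (simp add: cmod_power2)
qed

lemma norm_klein_shift_less:
  assumes h: "\<bar>h\<bar> < 1" and z: "cmod z < 1"
  shows "cmod (klein_shift h z) < 1"
proof -
  have z1: "cmod z \<le> 1" using z by simp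
  have d: "1 - h * Re z > 0" by (rule klein_shift_denom_pos[OF h z1])
  have "(cmod z)^2 < 1" using z by (simp add: power_less_one_iff)
  hence "(1 - h^2) * (1 - (cmod z)^2) / (1 - h * Re z)^2 > 0" using h d by (simp add: abs_square_less_1)
  hence "1 - (cmod (klein_shift h z))^2 > 0" unfolding one_minus_norm_klein_shift_sq[OF h z1] .
  hence "(cmod (klein_shift h z))^2 < 1" by simp
  thus ?thesis by (simp add: power_less_one_iff)
qed

lemma norm_klein_shift_eq_1:
  assumes h: "\<bar>h\<bar> < 1" and z: "cmod z = 1"
  shows "cmod (klein_shift h z) = 1"
proof -
  have z1: "cmod z \<le> 1" using z by simp
  have "1 - (cmod (klein_shift h z))^2 = 0" unfolding one_minus_norm_klein_shift_sq[OF h z1] using z by simp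
  hence "(cmod (klein_shift h z))^2 = 1" by simp
  thus ?thesis using power2_eq_iff_nonneg[OF norm_ge_zero zero_le_one, of "klein_shift h z"] by simp
qed

lemma klein_shift_inverse:
  assumes h: "\<bar>h\<bar> < 1" and z: "cmod z \<le> 1"
  shows "klein_shift (- h) (klein_shift h z) = z"
proof -
  have d: "1 - h * Re z > 0" by (rule klein_shift_denom_pos[OF h z])
  have hh: "1 - h^2 > 0" using h by (simp add: abs_square_less_1)
  define x where "x = Re z"
  define y where "y = Im z"
  define d where "d = 1 - h * x"
  have d0: "d \<noteq> 0" using d unfolding d_def x_def by simp
  have hh0: "1 - h^2 \<noteq> 0" using hh by simp
  note AI = klein_shift_inverse_identity[OF d0 d_def hh0]
  have rz: "Re (klein_shift h z) = (x - h) / d" unfolding klein_shift_Re x_def d_def ..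
  have den2: "1 - (- h) * Re (klein_shift h z) = (1 - h^2) / d" unfolding rz using AI(1) by simp
  have re: "Re (klein_shift (- h) (klein_shift h z)) = x"
  proof -
    have "Re (klein_shift (- h) (klein_shift h z))
        = (Re (klein_shift h z) - (- h)) / (1 - (- h) * Re (klein_shift h z))" by (rule klein_shift_Re)
    also have "\<dots> = ((x - h) / d + h) / (1 + h * ((x - h) / d))" unfolding rz by simp
    also have "\<dots> = x" by (rule AI(2))
    finally show ?thesis .
  qed
  have s: "sqrt (1 - h^2) * sqrt (1 - h^2) = 1 - h^2" using hh by simp
  have im: "Im (klein_shift (- h) (klein_shift h z)) = y"
  proof -
    have "Im (klein_shift (- h) (klein_shift h z)) = Im (klein_shift h z) * sqrt (1 - h^2) / ((1 - h^2) / d)"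
      using den2 unfolding klein_shift_Im[of "- h"] by simp
    also have "\<dots> = (y * sqrt (1 - h^2) / d) * sqrt (1 - h^2) / ((1 - h^2) / d)"
      unfolding klein_shift_Im x_def[symmetric] y_def[symmetric] d_def ..
    also have "\<dots> = y * (sqrt (1 - h^2) * sqrt (1 - h^2)) / (1 - h^2)"
      using d0 hh0 by (simp add: field_simps)
    also have "\<dots> = y" unfolding s using hh0 by simp
    finally show ?thesis .
  qed
  show ?thesis using re im unfolding x_def y_def by (simp add: complex_eq_iff)
qed

lemma one_minus_Re_cnj_klein_shift:
  assumes h: "\<bar>h\<bar> < 1" and a: "cmod a \<le> 1" and b: "cmod b \<le> 1"
  shows "1 - Re (cnj (klein_shift h a) * klein_shift h b)
    = (1 - h^2) * (1 - Re (cnj a * b)) / ((1 - h * Re a) * (1 - h * Re b))"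
proof -
  define A where "A = 1 - h * Re a"
  define B where "B = 1 - h * Re b"
  have A0: "A \<noteq> 0" and B0: "B \<noteq> 0"
    unfolding A_def B_def using klein_shift_denom_pos[OF h a] klein_shift_denom_pos[OF h b] by auto
  have "Re (cnj (klein_shift h a) * klein_shift h b)
      = Re (klein_shift h a) * Re (klein_shift h b) + Im (klein_shift h a) * Im (klein_shift h b)" by simp
  also have "\<dots> = (Re a - h) / A * ((Re b - h) / B) + Im a * Im b * (1 - h^2) / (A * B)"
    unfolding klein_shift_Im_mult[OF h] klein_shift_Re A_def B_def ..
  finally have "1 - Re (cnj (klein_shift h a) * klein_shift h b)
      = 1 - ((Re a - h) / A * ((Re b - h) / B) + Im a * Im b * (1 - h^2) / (A * B))"
    by simp
  also have "\<dots> = (A * B - ((Re a - h) * (Re b - h) + Im a * Im b * (1 - h^2))) / (A * B)"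
    using A0 B0 by (simp add: field_simps)
  also have "A * B - ((Re a - h) * (Re b - h) + Im a * Im b * (1 - h^2)) = (1 - h^2) * (1 - Re (cnj a * b))"
    unfolding A_def B_def by (simp add: algebra_simps power2_eq_square)
  finally show ?thesis unfolding A_def B_def .
qed

lemma klein_cosh_sq_klein_shift:
  assumes h: "\<bar>h\<bar> < 1" and a: "cmod a < 1" and b: "cmod b < 1"
  shows "klein_cosh_sq (klein_shift h a) (klein_shift h b) = klein_cosh_sq a b"
proof -
  have a1: "cmod a \<le> 1" and b1: "cmod b \<le> 1" using a b by auto
  have "1 - h * Re a > 0" "1 - h * Re b > 0" "1 - h^2 > 0"
    using klein_shift_denom_pos[OF h a1] klein_shift_denom_pos[OF h b1] h by (auto simp: abs_square_less_1)
  moreover have "(cmod a)^2 < 1" "(cmod b)^2 < 1" using a b by (simp_all add: power_less_one_iff)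
  hence "1 - (cmod a)^2 \<noteq> 0" "1 - (cmod b)^2 \<noteq> 0" by simp_all
  moreover have cancel: "(K * U / (x * y))^2 / ((K * V / x^2) * (K * W / y^2)) = U^2 / (V * W)"
    if "K \<noteq> 0" "x \<noteq> 0" "y \<noteq> 0" "V \<noteq> 0" "W \<noteq> 0" for K U V W x y :: real
    using that by (simp add: field_simps power2_eq_square)
  ultimately show ?thesis
    unfolding klein_cosh_sq_def one_minus_Re_cnj_klein_shift[OF h a1 b1]
      one_minus_norm_klein_shift_sq[OF h a1] one_minus_norm_klein_shift_sq[OF h b1]
    by (intro cancel) auto
qed

lemma cross_klein_shift:
  assumes h: "\<bar>h\<bar> < 1" and a: "cmod a \<le> 1" and b: "cmod b \<le> 1" and c: "cmod c \<le> 1"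
  shows "cross (klein_shift h b - klein_shift h a) (klein_shift h c - klein_shift h a) =
    sqrt (1 - h^2) * (1 - h^2) * cross (b - a) (c - a) / ((1 - h * Re a) * (1 - h * Re b) * (1 - h * Re c))"
proof -
  have da: "1 - h * Re a \<noteq> 0" using klein_shift_denom_pos[OF h a] by simp
  have db: "1 - h * Re b \<noteq> 0" using klein_shift_denom_pos[OF h b] by simp
  have dc: "1 - h * Re c \<noteq> 0" using klein_shift_denom_pos[OF h c] by simp
  have "cross (klein_shift h b - klein_shift h a) (klein_shift h c - klein_shift h a) =
     ((Re b - h) / (1 - h * Re b) - (Re a - h) / (1 - h * Re a))
         * (Im c * sqrt (1 - h^2) / (1 - h * Re c) - Im a * sqrt (1 - h^2) / (1 - h * Re a))
      - (Im b * sqrt (1 - h^2) / (1 - h * Re b) - Im a * sqrt (1 - h^2) / (1 - h * Re a))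
          * ((Re c - h) / (1 - h * Re c) - (Re a - h) / (1 - h * Re a))"
    by (simp add: cross_def klein_shift_Re klein_shift_Im)
  also have "\<dots> = sqrt (1 - h^2) * (1 - h^2) * ((Re b - Re a) * (Im c - Im a) - (Im b - Im a) * (Re c - Re a))
      / ((1 - h * Re a) * (1 - h * Re b) * (1 - h * Re c))"
    by (rule klein_shift_cross_identity[OF refl refl refl da db dc])
  finally show ?thesis unfolding cross_def by simp
qed

text \<open>An orientation-preserving isometry \<phi> of the Klein model with inverse \<psi>, acting on the
  closed disk; only the properties needed below are recorded.\<close>

definition klein_iso :: "(complex \<Rightarrow> complex) \<Rightarrow> (complex \<Rightarrow> complex) \<Rightarrow> bool" where
  "klein_iso \<phi> \<psi> \<longleftrightarrow> (\<forall>z. cmod z < 1 \<longrightarrow> cmod (\<phi> z) < 1 \<and> cmod (\<psi> z) < 1)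
    \<and> (\<forall>z. cmod z = 1 \<longrightarrow> cmod (\<phi> z) = 1 \<and> cmod (\<psi> z) = 1)
    \<and> (\<forall>z. cmod z \<le> 1 \<longrightarrow> \<psi> (\<phi> z) = z \<and> \<phi> (\<psi> z) = z)
    \<and> (\<forall>a b. cmod a < 1 \<longrightarrow> cmod b < 1 \<longrightarrow> klein_cosh_sq (\<phi> a) (\<phi> b) = klein_cosh_sq a b)
    \<and> (\<forall>a b c. cmod a \<le> 1 \<longrightarrow> cmod b \<le> 1 \<longrightarrow> cmod c \<le> 1 \<longrightarrow>
         sgn (cross (\<phi> b - \<phi> a) (\<phi> c - \<phi> a)) = sgn (cross (b - a) (c - a)))"

lemma klein_iso_cball:
  assumes "klein_iso \<phi> \<psi>" "cmod z \<le> 1"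
  shows "cmod (\<phi> z) \<le> 1" "cmod (\<psi> z) \<le> 1"
  using assms unfolding klein_iso_def by (cases "cmod z < 1"; force)+

lemma klein_iso_compose:
  assumes 1: "klein_iso \<phi>1 \<psi>1" and 2: "klein_iso \<phi>2 \<psi>2"
  shows "klein_iso (\<lambda>z. \<phi>2 (\<phi>1 z)) (\<lambda>z. \<psi>1 (\<psi>2 z))"
proof -
  note c1 = klein_iso_cball[OF 1] and c2 = klein_iso_cball[OF 2]
  show ?thesis unfolding klein_iso_def
  proof (intro conjI allI impI)
    fix z :: complex assume "cmod z < 1"
    thus "cmod (\<phi>2 (\<phi>1 z)) < 1" "cmod (\<psi>1 (\<psi>2 z)) < 1" using 1 2 unfolding klein_iso_def by blast+
  next
    fix z :: complex assume "cmod z = 1"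
    thus "cmod (\<phi>2 (\<phi>1 z)) = 1" "cmod (\<psi>1 (\<psi>2 z)) = 1" using 1 2 unfolding klein_iso_def by blast+
  next
    fix z :: complex assume z: "cmod z \<le> 1"
    show "\<psi>1 (\<psi>2 (\<phi>2 (\<phi>1 z))) = z" using 1 2 c1(1)[OF z] z unfolding klein_iso_def by simp
    show "\<phi>2 (\<phi>1 (\<psi>1 (\<psi>2 z))) = z" using 1 2 c2(2)[OF z] z unfolding klein_iso_def by simp
  next
    fix a b :: complex assume "cmod a < 1" "cmod b < 1"
    thus "klein_cosh_sq (\<phi>2 (\<phi>1 a)) (\<phi>2 (\<phi>1 b)) = klein_cosh_sq a b" using 1 2 unfolding klein_iso_def by simp
  next
    fix a b c :: complex assume a: "cmod a \<le> 1" and b: "cmod b \<le> 1" and c: "cmod c \<le> 1"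
    show "sgn (cross (\<phi>2 (\<phi>1 b) - \<phi>2 (\<phi>1 a)) (\<phi>2 (\<phi>1 c) - \<phi>2 (\<phi>1 a))) = sgn (cross (b - a) (c - a))"
      using 1 2 c1(1)[OF a] c1(1)[OF b] c1(1)[OF c] a b c unfolding klein_iso_def by simp
  qed
qed

lemma klein_iso_rotate:
  assumes w: "cmod w = 1"
  shows "klein_iso (\<lambda>z. w * z) (\<lambda>z. cnj w * z)"
proof -
  have ww: "cnj w * w = 1" using w by (simp add: complex_norm_square[symmetric] mult.commute)
  have ww': "w * cnj w = 1" using ww by (simp add: mult.commute)
  show ?thesis unfolding klein_iso_def
  proof (intro conjI allI impI)
    fix z :: complex
    show "cmod z < 1 \<Longrightarrow> cmod (w * z) < 1" "cmod z < 1 \<Longrightarrow> cmod (cnj w * z) < 1"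
      "cmod z = 1 \<Longrightarrow> cmod (w * z) = 1" "cmod z = 1 \<Longrightarrow> cmod (cnj w * z) = 1"
      using w by (simp_all add: norm_mult)
    show "cnj w * (w * z) = z" "w * (cnj w * z) = z" using ww ww' by (simp_all add: mult.assoc[symmetric])
  next
    fix a b :: complex
    have "Re (cnj (w * a) * (w * b)) = Re ((cnj w * w) * (cnj a * b))" by (simp add: algebra_simps)
    hence "Re (cnj (w * a) * (w * b)) = Re (cnj a * b)" using ww by simp
    thus "klein_cosh_sq (w * a) (w * b) = klein_cosh_sq a b"
        unfolding klein_cosh_sq_def using w by (simp add: norm_mult)
  next
    fix a b c :: complex
    have "cross (w * b - w * a) (w * c - w * a) = cross (w * (b - a)) (w * (c - a))" by (simp add: algebra_simps)
    also have "\<dots> = cross (b - a) (c - a)" unfolding cross_mult_mult w by simp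
    finally show "sgn (cross (w * b - w * a) (w * c - w * a)) = sgn (cross (b - a) (c - a))" by simp
  qed
qed

lemma klein_iso_shift:
  assumes h: "\<bar>h\<bar> < 1"
  shows "klein_iso (klein_shift h) (klein_shift (- h))"
proof -
  have h': "\<bar>- h\<bar> < 1" using h by simp
  show ?thesis unfolding klein_iso_def
  proof (intro conjI allI impI)
    fix z :: complex
    show "cmod z < 1 \<Longrightarrow> cmod (klein_shift h z) < 1" "cmod z < 1 \<Longrightarrow> cmod (klein_shift (- h) z) < 1"
      using norm_klein_shift_less[OF h] norm_klein_shift_less[OF h'] by auto
    show "cmod z = 1 \<Longrightarrow> cmod (klein_shift h z) = 1" "cmod z = 1 \<Longrightarrow> cmod (klein_shift (- h) z) = 1"
      using norm_klein_shift_eq_1[OF h] norm_klein_shift_eq_1[OF h'] by auto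
    show "cmod z \<le> 1 \<Longrightarrow> klein_shift (- h) (klein_shift h z) = z" using klein_shift_inverse[OF h] by auto
    show "cmod z \<le> 1 \<Longrightarrow> klein_shift h (klein_shift (- h) z) = z" using klein_shift_inverse[OF h'] by auto
  next
    fix a b :: complex
    show "cmod a < 1 \<Longrightarrow> cmod b < 1 \<Longrightarrow> klein_cosh_sq (klein_shift h a) (klein_shift h b) = klein_cosh_sq a b"
        using klein_cosh_sq_klein_shift[OF h] by auto
  next
    fix a b c :: complex
    assume a: "cmod a \<le> 1" and b: "cmod b \<le> 1" and c: "cmod c \<le> 1"
    have "sqrt (1 - h^2) * (1 - h^2) > 0" using h by (simp add: abs_square_less_1)
    moreover have "(1 - h * Re a) * (1 - h * Re b) * (1 - h * Re c) > 0"
      using klein_shift_denom_pos[OF h a] klein_shift_denom_pos[OF h b] klein_shift_denom_pos[OF h c] by simp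
    moreover have "sgn (k * X / D) = sgn X" if "k > 0" "D > 0" for k X D :: real
    proof -
      have "sgn (k / D) = 1" using that by simp
      thus ?thesis by (simp add: sgn_mult)
    qed
    ultimately show "sgn (cross (klein_shift h b - klein_shift h a) (klein_shift h c - klein_shift h a))
        = sgn (cross (b - a) (c - a))"
      unfolding cross_klein_shift[OF h a b c] by blast
  qed
qed

lemma klein_iso_inj:
  assumes "klein_iso \<phi> \<psi>" "cmod a \<le> 1" "cmod b \<le> 1" "\<phi> a = \<phi> b"
  shows "a = b"
  using assms unfolding klein_iso_def by metis

lemma klein_iso_cross_sgn:
  assumes "klein_iso \<phi> \<psi>" "cmod a \<le> 1" "cmod b \<le> 1" "cmod c \<le> 1"
  shows "sgn (cross (\<phi> b - \<phi> a) (\<phi> c - \<phi> a)) = sgn (cross (b - a) (c - a))"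
  using assms unfolding klein_iso_def by blast

lemma klein_iso_cross_iffs:
  assumes "klein_iso \<phi> \<psi>" "cmod a \<le> 1" "cmod b \<le> 1" "cmod c \<le> 1"
  shows "cross (\<phi> b - \<phi> a) (\<phi> c - \<phi> a) = 0 \<longleftrightarrow> cross (b - a) (c - a) = 0"
    and "cross (\<phi> b - \<phi> a) (\<phi> c - \<phi> a) > 0 \<longleftrightarrow> cross (b - a) (c - a) > 0"
    and "cross (\<phi> b - \<phi> a) (\<phi> c - \<phi> a) < 0 \<longleftrightarrow> cross (b - a) (c - a) < 0"
    and "cross (\<phi> b - \<phi> a) (\<phi> c - \<phi> a) \<ge> 0 \<longleftrightarrow> cross (b - a) (c - a) \<ge> 0"
  using klein_iso_cross_sgn[OF assms] by (metis sgn_0_0 sgn_greater sgn_less not_less)+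

lemma klein_iso_dK:
  assumes iso: "klein_iso \<phi> \<psi>" and a: "cmod a < 1" and b: "cmod b < 1"
  shows "dK (\<phi> a) (\<phi> b) = dK a b"
proof -
  have "cmod (\<phi> a) < 1" "cmod (\<phi> b) < 1" using iso a b unfolding klein_iso_def by auto
  thus ?thesis using iso a b by (simp add: dK_eq_iff_cosh_sq_eq klein_iso_def)
qed

lemma klein_iso_image_chord:
  assumes iso: "klein_iso \<phi> \<psi>" and P: "cmod P < 1" and Q: "cmod Q < 1" and PQ: "P \<noteq> Q"
  shows "\<phi> ` (line_thru P Q \<inter> Dsk) = line_thru (\<phi> P) (\<phi> Q) \<inter> Dsk"
proof -
  have P1: "cmod P \<le> 1" and Q1: "cmod Q \<le> 1" using P Q by auto
  have PQ': "\<phi> P \<noteq> \<phi> Q" using klein_iso_inj[OF iso P1 Q1] PQ by blast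
  have on_line: "\<phi> T \<in> line_thru (\<phi> P) (\<phi> Q) \<longleftrightarrow> T \<in> line_thru P Q" if "cmod T \<le> 1" for T
    unfolding line_thru_iff_cross[OF PQ'] line_thru_iff_cross[OF PQ]
    by (rule klein_iso_cross_iffs(1)[OF iso P1 Q1 that])
  show ?thesis
  proof (intro equalityI subsetI)
    fix S assume "S \<in> \<phi> ` (line_thru P Q \<inter> Dsk)"
    then obtain T where "T \<in> line_thru P Q" "cmod T < 1" "S = \<phi> T" unfolding Dsk_def by auto
    thus "S \<in> line_thru (\<phi> P) (\<phi> Q) \<inter> Dsk" using on_line iso unfolding Dsk_def klein_iso_def by auto
  next
    fix S assume S: "S \<in> line_thru (\<phi> P) (\<phi> Q) \<inter> Dsk"
    hence S1: "cmod S < 1" unfolding Dsk_def by simp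
    hence "cmod (\<psi> S) < 1" "\<phi> (\<psi> S) = S" using iso unfolding klein_iso_def by auto
    thus "S \<in> \<phi> ` (line_thru P Q \<inter> Dsk)" using on_line[of "\<psi> S"] S unfolding Dsk_def by force
  qed
qed

lemma klein_iso_deltaK:
  assumes iso: "klein_iso \<phi> \<psi>" and P: "cmod P < 1" and Q: "cmod Q < 1" and R: "cmod R < 1"
    and PQ: "P \<noteq> Q"
  shows "deltaK (\<phi> P) (\<phi> Q) (\<phi> R) = deltaK P Q R"
proof -
  define A where "A = line_thru P Q \<inter> Dsk"
  have "{dK (\<phi> R) S | S. S \<in> \<phi> ` A} = (\<lambda>T. dK (\<phi> R) (\<phi> T)) ` A" by auto
  also have "\<dots> = (\<lambda>T. dK R T) ` A"
    using klein_iso_dK[OF iso R] by (intro image_cong) (auto simp: A_def Dsk_def)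
  also have "\<dots> = {dK R T | T. T \<in> A}" by auto
  finally have "{dK (\<phi> R) S | S. S \<in> \<phi> ` A} = {dK R T | T. T \<in> A}" .
  thus ?thesis unfolding deltaK_def klein_iso_image_chord[OF iso P Q PQ, symmetric] A_def by simp
qed

text \<open>Isometries conjugate the circle maps of triangles: psi is defined by incidence and
  orientation only.\<close>

lemma psi_triangle_klein_iso:
  assumes iso: "klein_iso \<phi> \<psi>" and V: "{P,Q,R} \<subseteq> ball (0::complex) 1" and v: "cmod v = 1"
  shows "psi (convex hull {\<phi> P, \<phi> Q, \<phi> R}) (\<phi> v) = \<phi> (psi (convex hull {P,Q,R}) v)"
proof -
  define w where "w = psi (convex hull {P,Q,R}) v"
  have w: "cmod w = 1" "w \<noteq> v" unfolding w_def using psi_triangle_sphere[OF V v] by auto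
  then obtain c where c: "c \<in> {P,Q,R}" "cross (w - v) (c - v) = 0"
    and all: "\<forall>x\<in>{P,Q,R}. cross (w - v) (x - v) \<ge> 0"
    using psi_triangle_iff[OF V v w] w_def by auto
  have V1: "cmod x \<le> 1" if "x \<in> {P,Q,R}" for x using V that by auto
  have V': "{\<phi> P, \<phi> Q, \<phi> R} \<subseteq> ball 0 1" using iso V unfolding klein_iso_def by auto
  have v': "cmod (\<phi> v) = 1" and w': "cmod (\<phi> w) = 1" using iso v w unfolding klein_iso_def by auto
  have "\<phi> w \<noteq> \<phi> v" using klein_iso_inj[OF iso] v w by force
  moreover have "cross (\<phi> w - \<phi> v) (\<phi> c - \<phi> v) = 0"
    using klein_iso_cross_iffs(1)[OF iso _ _ V1[OF c(1)]] v w c by simp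
  moreover have "\<forall>x\<in>{P,Q,R}. cross (\<phi> w - \<phi> v) (\<phi> x - \<phi> v) \<ge> 0"
    using klein_iso_cross_iffs(4)[OF iso _ _ V1] v w all by simp
  ultimately show ?thesis unfolding w_def[symmetric]
    using psi_triangle_iff[OF V' v' w'] c(1) by blast
qed

lemma pentagram_klein_iso:
  assumes iso: "klein_iso \<phi> \<psi>"
    and "cmod o0 \<le> 1" "cmod o1 \<le> 1" "cmod o2 \<le> 1" "cmod o3 \<le> 1" "cmod o4 \<le> 1"
  shows "pentagram (\<phi> o0) (\<phi> o1) (\<phi> o2) (\<phi> o3) (\<phi> o4) \<longleftrightarrow> pentagram o0 o1 o2 o3 o4"
  unfolding pentagram_def using assms by (simp add: klein_iso_cross_iffs)

section \<open>Normal form of the triangle\<close>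

lemma klein_iso_shift_imag:
  assumes "\<bar>h\<bar> < 1"
  shows "klein_iso (\<lambda>z. \<i> * klein_shift h (- \<i> * z)) (\<lambda>z. \<i> * klein_shift (- h) (- \<i> * z))"
  using klein_iso_compose[OF klein_iso_compose[OF klein_iso_rotate klein_iso_shift[OF assms]]
      klein_iso_rotate, of "- \<i>" \<i>]
  by simp

lemma klein_normalize_side:
  assumes P: "cmod P < 1" and PQ: "P \<noteq> Q"
  obtains \<phi> \<psi> where "klein_iso \<phi> \<psi>" "Im (\<phi> P) = 0" "Im (\<phi> Q) = 0"
proof -
  define w where "w = cnj (Q - P) / of_real (cmod (Q - P))"
  have w1: "cmod w = 1" unfolding w_def norm_divide complex_mod_cnj using PQ by simp
  have "Im (w * (Q - P)) = Im (cnj (Q - P) * (Q - P)) / cmod (Q - P)"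
    unfolding w_def by (simp only: times_divide_eq_left Im_divide_of_real)
  hence wQ: "Im (w * Q) = Im (w * P)" by (simp add: algebra_simps)
  define h where "h = Im (w * P)"
  have "\<bar>h\<bar> \<le> cmod (w * P)" unfolding h_def by (rule abs_Im_le_cmod)
  also have "\<dots> < 1" using P w1 by (simp add: norm_mult)
  finally have h: "\<bar>h\<bar> < 1" .
  have "klein_iso (\<lambda>z. \<i> * klein_shift h (- \<i> * (w * z))) (\<lambda>z. cnj w * (\<i> * klein_shift (- h) (- \<i> * z)))"
    by (rule klein_iso_compose[OF klein_iso_rotate[OF w1] klein_iso_shift_imag[OF h]])
  moreover have "Im (\<i> * klein_shift h (- \<i> * (w * z))) = 0" if "Im (w * z) = h" for z
    using that by (simp add: klein_shift_def)
  ultimately show ?thesis using that wQ unfolding h_def by blast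
qed

text \<open>Move P, Q to the real axis, then shift along it to put R on the imaginary axis, and finally
  turn by a half-turn if R lies below.\<close>

lemma klein_normalize:
  assumes P: "cmod P < 1" and Q: "cmod Q < 1" and R: "cmod R < 1"
    and nc: "\<not> collinear {P, Q, R}"
  obtains \<phi> \<psi> where "klein_iso \<phi> \<psi>" "Im (\<phi> P) = 0" "Im (\<phi> Q) = 0" "Re (\<phi> R) = 0" "Im (\<phi> R) > 0"
proof -
  have PQ: "P \<noteq> Q" and cr: "cross (Q - P) (R - P) \<noteq> 0"
    using not_collinear_imp_cross_nonzero[OF nc] by auto
  obtain \<phi>1 \<psi>1 where I1: "klein_iso \<phi>1 \<psi>1" and P1: "Im (\<phi>1 P) = 0" and Q1: "Im (\<phi>1 Q) = 0"
    using klein_normalize_side[OF P PQ] .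
  define x where "x = Re (\<phi>1 R)"
  have "cmod (\<phi>1 R) < 1" using I1 R unfolding klein_iso_def by auto
  hence x: "\<bar>x\<bar> < 1" unfolding x_def using abs_Re_le_cmod[of "\<phi>1 R"] by linarith
  define \<phi>2 where "\<phi>2 z = klein_shift x (\<phi>1 z)" for z
  define \<psi>2 where "\<psi>2 z = \<psi>1 (klein_shift (- x) z)" for z
  have I2: "klein_iso \<phi>2 \<psi>2"
    unfolding \<phi>2_def \<psi>2_def by (rule klein_iso_compose[OF I1 klein_iso_shift[OF x]])
  have P2: "Im (\<phi>2 P) = 0" and Q2: "Im (\<phi>2 Q) = 0" and R2: "Re (\<phi>2 R) = 0"
    unfolding \<phi>2_def using P1 Q1 by (simp_all add: klein_shift_def x_def)
  have "cross (\<phi>2 Q - \<phi>2 P) (\<phi>2 R - \<phi>2 P) \<noteq> 0"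
    using klein_iso_cross_iffs(1)[OF I2] P Q R cr by simp
  hence "Im (\<phi>2 R) \<noteq> 0" using P2 Q2 unfolding cross_def by auto
  show ?thesis
  proof (cases "Im (\<phi>2 R) > 0")
    case True thus ?thesis using that I2 P2 Q2 R2 by blast
  next
    case False
    have "klein_iso (\<lambda>z. -1 * \<phi>2 z) (\<lambda>z. \<psi>2 (cnj (-1) * z))"
      by (rule klein_iso_compose[OF I2 klein_iso_rotate]) simp
    thus ?thesis using that P2 Q2 R2 False \<open>Im (\<phi>2 R) \<noteq> 0\<close> by simp
  qed
qed

lemma dK_eq_half_abs_ln:
  assumes "cmod a < 1" "cmod b < 1" "X > 0" "(X + 1)^2 / (4 * X) = klein_cosh_sq a b"
  shows "dK a b = \<bar>ln X\<bar> / 2"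
  by (rule cosh_sq_inj_nonneg) (use assms in \<open>simp_all add: dK_nonneg cosh_dK_sq cosh_half_abs_ln_sq\<close>)

lemma klein_cosh_sq_of_real:
  "klein_cosh_sq (of_real p) (of_real q) = (1 - p * q)^2 / ((1 - p^2) * (1 - q^2))"
  unfolding klein_cosh_sq_def by simp

text \<open>The real diameter is parametrised by p = (\<alpha>^2 - 1) / (\<alpha>^2 + 1), the point at distance
  ln \<alpha> from 0.\<close>

lemma dK_real_axis:
  assumes "0 < \<alpha>" "\<alpha> < \<beta>"
  shows "dK (of_real ((\<alpha>^2 - 1) / (\<alpha>^2 + 1))) (of_real ((\<beta>^2 - 1) / (\<beta>^2 + 1))) = ln (\<beta> / \<alpha>)"
proof -
  define A B where "A = \<alpha>^2" and "B = \<beta>^2"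
  have A: "A > 0" and B: "B > 0" and AB: "A < B"
    unfolding A_def B_def using assms by (auto intro: power_strict_mono)
  have inside: "cmod (complex_of_real ((t - 1) / (t + 1))) < 1" if "t > 0" for t :: real
  proof -
    have "\<bar>(t - 1) / (t + 1)\<bar> < 1" using that by (simp add: abs_less_iff field_simps)
    thus ?thesis by (simp only: norm_of_real)
  qed
  have e1: "1 - ((A - 1) / (A + 1)) * ((B - 1) / (B + 1)) = 2 * (A + B) / ((A + 1) * (B + 1))"
    using A B by (simp add: divide_simps) (simp add: algebra_simps)
  have e2: "1 - ((t - 1) / (t + 1))^2 = 4 * t / (t + 1)^2" if "t > 0" for t :: real
    using that by (simp add: divide_simps) (simp add: algebra_simps power2_eq_square)
  have "(B / A + 1)^2 / (4 * (B / A)) = (A + B)^2 / (4 * A * B)"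
    using A B by (simp add: field_simps power2_eq_square)
  also have "\<dots> = klein_cosh_sq (of_real ((A - 1) / (A + 1))) (of_real ((B - 1) / (B + 1)))"
    unfolding klein_cosh_sq_of_real e1 e2[OF A] e2[OF B] using A B
    by (simp add: divide_simps) (simp add: algebra_simps power2_eq_square)
  finally have "dK (of_real ((A - 1) / (A + 1))) (of_real ((B - 1) / (B + 1))) = \<bar>ln (B / A)\<bar> / 2"
    using A B inside by (intro dK_eq_half_abs_ln) auto
  also have "\<dots> = ln (\<beta> / \<alpha>)"
    using assms AB A unfolding A_def B_def by (simp add: ln_div ln_realpow)
  finally show ?thesis unfolding A_def B_def .
qed

lemma dK_imag_axis:
  assumes "0 \<le> r" "r < 1"
  shows "dK (Complex 0 r) 0 = ln ((1 + r) / (1 - r)) / 2"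
proof -
  have cancel: "(2 / d)^2 / (4 * (e / d)) = 1 / (d * e)" if "d > 0" "e > 0" for d e :: real
    using that by (simp add: field_simps power2_eq_square)
  have "(1 + r) / (1 - r) + 1 = 2 / (1 - r)" using assms by (simp add: field_simps)
  hence "(((1 + r) / (1 - r)) + 1)^2 / (4 * ((1 + r) / (1 - r))) = (2 / (1 - r))^2 / (4 * ((1 + r) / (1 - r)))"
    by simp
  also have "\<dots> = 1 / ((1 - r) * (1 + r))" by (rule cancel) (use assms in auto)
  also have "\<dots> = klein_cosh_sq (Complex 0 r) 0"
    unfolding klein_cosh_sq_def by (simp add: cmod_def algebra_simps power2_eq_square)
  finally have "(((1 + r) / (1 - r)) + 1)^2 / (4 * ((1 + r) / (1 - r))) = klein_cosh_sq (Complex 0 r) 0" .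
  hence "dK (Complex 0 r) 0 = \<bar>ln ((1 + r) / (1 - r))\<bar> / 2"
    using assms by (intro dK_eq_half_abs_ln) (auto simp: cmod_def)
  thus ?thesis using assms by simp
qed

text \<open>In the normal form the foot of the perpendicular from R to the real axis is 0.\<close>

lemma deltaK_normal:
  fixes p q r :: real
  assumes pq: "p \<noteq> q" and r: "0 < r" "r < 1"
  shows "deltaK (of_real p) (of_real q) (Complex 0 r) = dK (Complex 0 r) 0"
proof -
  have Rb: "cmod (Complex 0 r) < 1" using r by (simp add: cmod_def)
  have line: "S \<in> line_thru (of_real p) (of_real q) \<longleftrightarrow> Im S = 0" for S
    using pq by (subst line_thru_iff_cross) (auto simp: cross_def)
  have "dK (Complex 0 r) 0 \<le> dK (Complex 0 r) S" if S: "Im S = 0" "cmod S < 1" for S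
  proof (rule dK_le_if_cosh_sq_le[OF Rb _ S(2)])
    have "(Re S)^2 < 1" using S by (simp add: cmod_def abs_square_less_1)
    moreover have "r^2 < 1" using r by (simp add: power_less_one_iff)
    ultimately show "klein_cosh_sq (Complex 0 r) 0 \<le> klein_cosh_sq (Complex 0 r) S"
      unfolding klein_cosh_sq_def using S(1)
      by (simp add: cmod_def frac_le mult_le_cancel_left1 divide_le_cancel)
  qed simp
  moreover have "dK (Complex 0 r) 0 \<in> {dK (Complex 0 r) S | S. S \<in> line_thru (of_real p) (of_real q) \<inter> Dsk}"
    using line[of 0] unfolding Dsk_def by auto
  ultimately show ?thesis unfolding deltaK_def using line unfolding Dsk_def
    by (intro cInf_eq_minimum) auto
qed

text \<open>The hypothesis of the theorem in the normal form: with P, Q parametrised by \<alpha> < \<beta> as in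
  dK_real_axis, it says (1 + r) / (1 - r) = (\<beta> + \<alpha>) / (\<beta> - \<alpha>).\<close>

lemma normal_form_param:
  fixes p q r :: real
  assumes p: "\<bar>p\<bar> < 1" and q: "\<bar>q\<bar> < 1" and pq: "p < q" and r: "0 < r" "r < 1"
    and hyp: "deltaK (of_real p) (of_real q) (Complex 0 r) = DeltaK 1 (of_real p) (of_real q) / 2"
  obtains \<alpha> \<beta> where "0 < \<alpha>" "\<alpha> < \<beta>" "p = (\<alpha>^2 - 1) / (\<alpha>^2 + 1)" "q = (\<beta>^2 - 1) / (\<beta>^2 + 1)"
    "r = \<alpha> / \<beta>"
proof -
  define \<alpha> where "\<alpha> = sqrt ((1 + p) / (1 - p))"
  define \<beta> where "\<beta> = sqrt ((1 + q) / (1 - q))"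
  have pp: "1 - p > 0" "1 + p > 0" and qq: "1 - q > 0" "1 + q > 0" using p q by auto
  have a0: "\<alpha> > 0" unfolding \<alpha>_def using pp by simp
  have ab: "\<alpha> < \<beta>" unfolding \<alpha>_def \<beta>_def using pp qq pq by (simp add: field_simps)
  have pa: "p = (\<alpha>^2 - 1) / (\<alpha>^2 + 1)" unfolding \<alpha>_def using pp by (simp add: field_simps)
  have qb: "q = (\<beta>^2 - 1) / (\<beta>^2 + 1)" unfolding \<beta>_def using qq by (simp add: field_simps)
  have "\<beta> / \<alpha> + 1 = (\<beta> + \<alpha>) / \<alpha>" "\<beta> / \<alpha> - 1 = (\<beta> - \<alpha>) / \<alpha>"
    using a0 by (simp_all add: field_simps)
  hence "(\<beta> / \<alpha> + 1) / (\<beta> / \<alpha> - 1) = (\<beta> + \<alpha>) / (\<beta> - \<alpha>)" using a0 by simp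
  hence "DeltaK 1 (of_real p) (of_real q) = ln ((\<beta> + \<alpha>) / (\<beta> - \<alpha>))"
    unfolding DeltaK_def pa qb dK_real_axis[OF a0 ab] using a0 ab by simp
  moreover have "deltaK (of_real p) (of_real q) (Complex 0 r) = ln ((1 + r) / (1 - r)) / 2"
    using deltaK_normal[of p q r] pq r dK_imag_axis[of r] by simp
  ultimately have "ln ((1 + r) / (1 - r)) = ln ((\<beta> + \<alpha>) / (\<beta> - \<alpha>))" using hyp by simp
  moreover have "(1 + r) / (1 - r) > 0" "(\<beta> + \<alpha>) / (\<beta> - \<alpha>) > 0" using r a0 ab by auto
  ultimately have "(1 + r) / (1 - r) = (\<beta> + \<alpha>) / (\<beta> - \<alpha>)" by simp
  hence "(1 + r) * (\<beta> - \<alpha>) = (\<beta> + \<alpha>) * (1 - r)" using r ab by (simp add: field_simps)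
  hence "r * \<beta> = \<alpha>" by (simp add: algebra_simps)
  hence "r = \<alpha> / \<beta>" using a0 ab by (simp add: field_simps)
  thus ?thesis using that a0 ab pa qb by blast
qed

section \<open>A periodic orbit of period 5\<close>

text \<open>The normal-form triangle with parameters 0 < a < b (see normal_form_param), and five points of
  the circle that psi permutes cyclically: the chords from pent_i to pent_(i+1) pass through
  P and Q, R, P, Q, R in turn, each leaving the triangle on its left.\<close>

definition nf_P :: "real \<Rightarrow> complex" where "nf_P a = Complex ((a^2 - 1) / (a^2 + 1)) 0"
definition nf_Q :: "real \<Rightarrow> complex" where "nf_Q b = Complex ((b^2 - 1) / (b^2 + 1)) 0"
definition nf_R :: "real \<Rightarrow> real \<Rightarrow> complex" where "nf_R a b = Complex 0 (a / b)"

definition pent0 :: complex where "pent0 = Complex (-1) 0"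
definition pent1 :: complex where "pent1 = Complex 1 0"
definition pent2 :: "real \<Rightarrow> real \<Rightarrow> complex" where
  "pent2 a b = Complex (- (b^2 - a^2) / (a^2 + b^2)) (2 * a * b / (a^2 + b^2))"
definition pent3 :: "real \<Rightarrow> real \<Rightarrow> complex" where
  "pent3 a b = Complex ((a^2 * b^2 - 1) / (a^2 * b^2 + 1)) (- (2 * a * b) / (a^2 * b^2 + 1))"
definition pent4 :: "real \<Rightarrow> real \<Rightarrow> complex" where
  "pent4 a b = Complex ((b^2 - a^2) / (a^2 + b^2)) (2 * a * b / (a^2 + b^2))"

lemmas normal_form_defs = nf_P_def nf_Q_def nf_R_def pent0_def pent1_def pent2_def pent3_def pent4_def

context
  fixes a b :: real
  assumes a: "0 < a" and ab: "a < b"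
begin

private lemma pos: "0 < b" "0 < a^2 + b^2" "0 < a^2 * b^2 + 1" "0 < a^2 + 1" "0 < b^2 + 1" "a^2 < b^2"
  using a ab by (auto intro: add_pos_nonneg power_strict_mono)

private lemma nz: "a^2 + b^2 \<noteq> 0" "a^2 * b^2 + 1 \<noteq> 0" "a^2 + 1 \<noteq> 0" "b^2 + 1 \<noteq> 0" "b \<noteq> 0" "a \<noteq> 0"
  using pos a by auto

private lemma cross_chord0:
  shows "cross (pent1 - pent0) (nf_P a - pent0) = 0"
    and "cross (pent1 - pent0) (nf_Q b - pent0) = 0"
    and "cross (pent1 - pent0) (nf_R a b - pent0) = 2 * a / b"
    and "cross (pent1 - pent0) (pent2 a b - pent0) = 4 * a * b / (a^2 + b^2)"
    and "cross (pent1 - pent0) (pent3 a b - pent0) = - 4 * a * b / (a^2 * b^2 + 1)"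
  unfolding normal_form_defs cross_def using nz
  by (simp add: divide_simps; simp add: algebra_simps power2_eq_square power3_eq_cube)+

private lemma cross_chord1:
  shows "cross (pent2 a b - pent1) (nf_P a - pent1) = 4 * a * b / ((a^2 + b^2) * (a^2 + 1))"
    and "cross (pent2 a b - pent1) (nf_Q b - pent1) = 4 * a * b / ((a^2 + b^2) * (b^2 + 1))"
    and "cross (pent2 a b - pent1) (nf_R a b - pent1) = 0"
    and "cross (pent2 a b - pent1) (pent3 a b - pent1) = 4 * a * b * (b^2 + 1) / ((a^2 + b^2) * (a^2 * b^2 + 1))"
    and "cross (pent2 a b - pent1) (pent4 a b - pent1) = - 4 * a * b * (b^2 - a^2) / (a^2 + b^2)^2"
  unfolding normal_form_defs cross_def using nz
  by (simp add: divide_simps; simp add: algebra_simps power2_eq_square power3_eq_cube)+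

private lemma cross_chord2:
  shows "cross (pent3 a b - pent2 a b) (nf_P a - pent2 a b) = 0"
    and "cross (pent3 a b - pent2 a b) (nf_Q b - pent2 a b)
        = 4 * a * b * (b^2 - a^2) / ((a^2 + b^2) * (a^2 * b^2 + 1))"
    and "cross (pent3 a b - pent2 a b) (nf_R a b - pent2 a b)
        = 2 * a * (b^2 - a^2) * (b^2 + 1) / (b * (a^2 + b^2) * (a^2 * b^2 + 1))"
    and "cross (pent3 a b - pent2 a b) (pent4 a b - pent2 a b)
        = 4 * a * b * (b^2 - a^2) * (a^2 + 1) * (b^2 + 1) / ((a^2 + b^2)^2 * (a^2 * b^2 + 1))"
    and "cross (pent3 a b - pent2 a b) (pent0 - pent2 a b)
        = - 4 * a^3 * b * (b^2 + 1) / ((a^2 + b^2) * (a^2 * b^2 + 1))"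
  unfolding normal_form_defs cross_def using nz
  by (simp add: divide_simps; simp add: algebra_simps power2_eq_square power3_eq_cube)+

private lemma cross_chord3:
  shows "cross (pent4 a b - pent3 a b) (nf_P a - pent3 a b)
      = 4 * a * b * (b^2 - a^2) / ((a^2 + b^2) * (a^2 * b^2 + 1))"
    and "cross (pent4 a b - pent3 a b) (nf_Q b - pent3 a b) = 0"
    and "cross (pent4 a b - pent3 a b) (nf_R a b - pent3 a b)
        = 2 * a * b * (b^2 - a^2) * (a^2 + 1) / ((a^2 + b^2) * (a^2 * b^2 + 1))"
    and "cross (pent4 a b - pent3 a b) (pent0 - pent3 a b)
        = 4 * a * b^3 * (a^2 + 1) / ((a^2 + b^2) * (a^2 * b^2 + 1))"
    and "cross (pent4 a b - pent3 a b) (pent1 - pent3 a b)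
        = - 4 * a * b * (a^2 + 1) / ((a^2 + b^2) * (a^2 * b^2 + 1))"
  unfolding normal_form_defs cross_def using nz
  by (simp add: divide_simps; simp add: algebra_simps power2_eq_square power3_eq_cube)+

private lemma cross_chord4:
  shows "cross (pent0 - pent4 a b) (nf_P a - pent4 a b) = 4 * a^3 * b / ((a^2 + b^2) * (a^2 + 1))"
    and "cross (pent0 - pent4 a b) (nf_Q b - pent4 a b) = 4 * a * b^3 / ((a^2 + b^2) * (b^2 + 1))"
    and "cross (pent0 - pent4 a b) (nf_R a b - pent4 a b) = 0"
    and "cross (pent0 - pent4 a b) (pent1 - pent4 a b) = 4 * a * b / (a^2 + b^2)"
    and "cross (pent0 - pent4 a b) (pent2 a b - pent4 a b) = - 4 * a * b * (b^2 - a^2) / (a^2 + b^2)^2"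
  unfolding normal_form_defs cross_def using nz
  by (simp add: divide_simps; simp add: algebra_simps power2_eq_square power3_eq_cube)+

lemma norm_pent:
  "cmod pent0 = 1" "cmod pent1 = 1" "cmod (pent2 a b) = 1" "cmod (pent3 a b) = 1" "cmod (pent4 a b) = 1"
  unfolding normal_form_defs cmod_def using nz
  by (simp add: divide_simps; simp add: algebra_simps power2_eq_square)+

lemma nf_triangle_in_disk: "{nf_P a, nf_Q b, nf_R a b} \<subseteq> ball 0 1"
proof -
  have "\<bar>(t^2 - 1) / (t^2 + 1)\<bar> < 1" if "t > 0" for t :: real
  proof -
    have "t^2 + 1 > 0" using zero_le_power2[of t] by linarith
    thus ?thesis using that by (simp add: abs_less_iff field_simps)
  qed
  moreover have "a / b < 1" using a ab by simp
  ultimately show ?thesis unfolding nf_P_def nf_Q_def nf_R_def using a ab by (auto simp: cmod_def)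
qed

lemma pentagram_normal_form: "pentagram pent0 pent1 (pent2 a b) (pent3 a b) (pent4 a b)"
  unfolding pentagram_def cross_chord0 cross_chord1 cross_chord2 cross_chord3 cross_chord4
  using a pos by (simp add: zero_less_mult_iff zero_less_divide_iff divide_less_0_iff mult_less_0_iff)

lemma psi_normal_form_orbit:
  defines "T \<equiv> convex hull {nf_P a, nf_Q b, nf_R a b}"
  shows "psi T pent0 = pent1" "psi T pent1 = pent2 a b" "psi T (pent2 a b) = pent3 a b"
    "psi T (pent3 a b) = pent4 a b" "psi T (pent4 a b) = pent0"
proof -
  note eqI = psi_triangle_eqI[OF nf_triangle_in_disk, folded T_def]
  have ne: "pent1 \<noteq> pent0" "pent2 a b \<noteq> pent1" "pent3 a b \<noteq> pent2 a b" "pent4 a b \<noteq> pent3 a b"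
    "pent0 \<noteq> pent4 a b"
    using pentagram_normal_form unfolding pentagram_def by (auto simp del: cross_self)
  have sg: "0 < 2 * a / b" "0 < 4 * a * b / ((a^2 + b^2) * (a^2 + 1))"
    "0 < 4 * a * b / ((a^2 + b^2) * (b^2 + 1))"
    "0 < 4 * a * b * (b^2 - a^2) / ((a^2 + b^2) * (a^2 * b^2 + 1))"
    "0 < 2 * a * (b^2 - a^2) * (b^2 + 1) / (b * (a^2 + b^2) * (a^2 * b^2 + 1))"
    "0 < 2 * a * b * (b^2 - a^2) * (a^2 + 1) / ((a^2 + b^2) * (a^2 * b^2 + 1))"
    "0 < 4 * a^3 * b / ((a^2 + b^2) * (a^2 + 1))" "0 < 4 * a * b^3 / ((a^2 + b^2) * (b^2 + 1))"
    using a pos by simp_all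
  show "psi T pent0 = pent1"
    by (rule eqI[OF norm_pent(1,2) ne(1), of "nf_P a"]) (use cross_chord0 sg in auto)
  show "psi T pent1 = pent2 a b"
    by (rule eqI[OF norm_pent(2,3) ne(2), of "nf_R a b"]) (use cross_chord1 sg in auto)
  show "psi T (pent2 a b) = pent3 a b"
    by (rule eqI[OF norm_pent(3,4) ne(3), of "nf_P a"]) (use cross_chord2 sg in auto)
  show "psi T (pent3 a b) = pent4 a b"
    by (rule eqI[OF norm_pent(4,5) ne(4), of "nf_Q b"]) (use cross_chord3 sg in auto)
  show "psi T (pent4 a b) = pent0"
    by (rule eqI[OF norm_pent(5,1) ne(5), of "nf_R a b"]) (use cross_chord4 sg in auto)
qed

end

section \<open>The rotation number\<close>

lemma has_rotation_number_normal_position: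
  assumes iso: "klein_iso \<phi> \<psi>" and V: "{P,Q,R} \<subseteq> ball (0::complex) 1"
    and nf: "\<phi> P = nf_P a" "\<phi> Q = nf_Q b" "\<phi> R = nf_R a b" and ab: "0 < a" "a < b"
  shows "has_rotation_number (psi (convex hull {P, Q, R})) (2 / 5)"
proof -
  let ?f = "psi (convex hull {P, Q, R})"
  define o0 o1 o2 o3 o4 where "o0 = \<psi> pent0" and "o1 = \<psi> pent1" and "o2 = \<psi> (pent2 a b)"
    and "o3 = \<psi> (pent3 a b)" and "o4 = \<psi> (pent4 a b)"
  note pent = norm_pent[OF ab]
  have u: "cmod o0 = 1" "cmod o1 = 1" "cmod o2 = 1" "cmod o3 = 1" "cmod o4 = 1"
    unfolding o0_def o1_def o2_def o3_def o4_def using iso pent unfolding klein_iso_def by auto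
  have \<phi>o: "\<phi> o0 = pent0" "\<phi> o1 = pent1" "\<phi> o2 = pent2 a b" "\<phi> o3 = pent3 a b" "\<phi> o4 = pent4 a b"
    unfolding o0_def o1_def o2_def o3_def o4_def using iso pent unfolding klein_iso_def by auto
  have step: "?f z = z'"
    if "cmod z = 1" "cmod z' = 1" "psi (convex hull {nf_P a, nf_Q b, nf_R a b}) (\<phi> z) = \<phi> z'" for z z'
  proof (rule klein_iso_inj[OF iso])
    show "\<phi> (?f z) = \<phi> z'" using psi_triangle_klein_iso[OF iso V that(1)] nf that(3) by simp
  qed (use psi_triangle_sphere[OF V] that in auto)
  have orb: "?f o0 = o1" "?f o1 = o2" "?f o2 = o3" "?f o3 = o4" "?f o4 = o0"
    using step u \<phi>o psi_normal_form_orbit[OF ab] by simp_all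
  have "pentagram o0 o1 o2 o3 o4"
    using pentagram_klein_iso[OF iso, of o0 o1 o2 o3 o4] u \<phi>o pentagram_normal_form[OF ab] by simp
  thus ?thesis
    using has_rotation_number_pentagram[OF continuous_on_psi_triangle[OF V] psi_triangle_sphere(1)[OF V]
        psi_triangle_sphere(2)[OF V] inj_on_psi_triangle[OF V] u orb]
    by simp
qed

lemma has_rotation_number_ordered:
  assumes disk: "cmod P < 1" "cmod Q < 1" "cmod R < 1"
    and hyp: "deltaK P Q R = DeltaK 1 P Q / 2"
    and iso: "klein_iso \<phi> \<psi>" and pos: "Im (\<phi> P) = 0" "Im (\<phi> Q) = 0" "Re (\<phi> R) = 0" "Im (\<phi> R) > 0"
    and less: "Re (\<phi> P) < Re (\<phi> Q)"
  shows "has_rotation_number (psi (convex hull {P, Q, R})) (2 / 5)"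
proof -
  define p q r where "p = Re (\<phi> P)" and "q = Re (\<phi> Q)" and "r = Im (\<phi> R)"
  have eP: "\<phi> P = of_real p" and eQ: "\<phi> Q = of_real q" and eR: "\<phi> R = Complex 0 r"
    unfolding p_def q_def r_def using pos by (simp_all add: complex_eq_iff)
  have "cmod (\<phi> P) < 1" "cmod (\<phi> Q) < 1" "cmod (\<phi> R) < 1" using iso disk unfolding klein_iso_def by auto
  hence p: "\<bar>p\<bar> < 1" and q: "\<bar>q\<bar> < 1" and r: "r < 1" unfolding eP eQ eR by (auto simp: cmod_def)
  have "P \<noteq> Q" using less by auto
  hence "deltaK (of_real p) (of_real q) (Complex 0 r) = DeltaK 1 (of_real p) (of_real q) / 2"
    using hyp klein_iso_deltaK[OF iso disk] klein_iso_dK[OF iso disk(1,2)]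
    unfolding eP eQ eR DeltaK_def by simp
  then obtain \<alpha> \<beta> where ab: "0 < \<alpha>" "\<alpha> < \<beta>" and "p = (\<alpha>^2 - 1) / (\<alpha>^2 + 1)"
    "q = (\<beta>^2 - 1) / (\<beta>^2 + 1)" "r = \<alpha> / \<beta>"
    using normal_form_param[OF p q _ _ r] less pos(4) unfolding p_def q_def r_def by blast
  hence "\<phi> P = nf_P \<alpha>" "\<phi> Q = nf_Q \<beta>" "\<phi> R = nf_R \<alpha> \<beta>"
    unfolding eP eQ eR nf_P_def nf_Q_def nf_R_def by (simp_all add: complex_eq_iff)
  moreover have "{P,Q,R} \<subseteq> ball 0 1" using disk by auto
  ultimately show ?thesis using has_rotation_number_normal_position[OF iso] ab by blast
qed

theorem lemma4p3:
  fixes P Q R :: complex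
  assumes "P \<in> Dsk" and "Q \<in> Dsk" and "R \<in> Dsk"
    and "\<not> collinear {P, Q, R}"
    and "deltaK P Q R = DeltaK 1 P Q / 2"
  shows "has_rotation_number (psi (convex hull {P, Q, R})) (2/5)"
proof -
  have disk: "cmod P < 1" "cmod Q < 1" "cmod R < 1" using assms(1-3) unfolding Dsk_def by auto
  obtain \<phi> \<psi> where iso: "klein_iso \<phi> \<psi>"
    and pos: "Im (\<phi> P) = 0" "Im (\<phi> Q) = 0" "Re (\<phi> R) = 0" "Im (\<phi> R) > 0"
    using klein_normalize[OF disk assms(4)] .
  have PQ: "P \<noteq> Q" using not_collinear_imp_cross_nonzero(1)[OF assms(4)] .
  hence "\<phi> P \<noteq> \<phi> Q" using klein_iso_inj[OF iso] disk by force
  hence "Re (\<phi> P) < Re (\<phi> Q) \<or> Re (\<phi> Q) < Re (\<phi> P)"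
    using pos by (metis complex.expand linorder_neqE_linordered_idom)
  thus ?thesis
  proof
    assume "Re (\<phi> P) < Re (\<phi> Q)"
    thus ?thesis by (rule has_rotation_number_ordered[OF disk assms(5) iso pos])
  next
    assume "Re (\<phi> Q) < Re (\<phi> P)"
    moreover have "deltaK Q P R = DeltaK 1 Q P / 2"
      using assms(5) deltaK_commute[OF PQ] dK_commute[OF disk(1,2)] unfolding DeltaK_def by simp
    ultimately have "has_rotation_number (psi (convex hull {Q, P, R})) (2 / 5)"
      using has_rotation_number_ordered[OF disk(2,1,3) _ iso pos(2,1,3,4)] by blast
    thus ?thesis by (simp add: insert_commute)
  qed
qed

end
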